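(* Assume the setting below, with $\kappa_f(x,i)=K_ix$ where the gains $K_i$ are such that the Markov jump linear system $z_{k+1}=\Gamma_{\theta_k}z_k$, $\Gamma_i=A_i+B_iK_i$, is mean square stable, and assume $\hat f_\theta$ is $\beta_f^\theta$-smooth and $\bar\ell(\cdot,\theta)$ is $\beta_\ell^\theta$-smooth for every $\theta$, and the pairs $\{(A_i,B_i)\}_{i\in\mathcal{N}}$ are mean square stabilizable. Then there exist $\delta>0$ and $\alpha>0$ such that the terminal cost $V_f$ constructed below with this $\alpha$ satisfies $$\mathcal{L}V_f(x,\theta):=\mathbb{E}[V_f(\hat f_\theta(x),\theta_{k+1})-V_f(x,\theta)\mid\theta_k=\theta]\le-\bar\ell(x,\theta)\quad\text{for all }x\in\mathcal{B}_\delta,\ \theta\in\mathcal{N}.$$ If, in addition, $X^f=\{X^f_i\}$ is uniformly positive invariant for the constrained system in closed loop with $\kappa_f$, with $X^f_i\subseteq\mathcal{B}_\delta$ for all $i$, and the strict stochastic dissipativity assumption holds with $\rho(x,i)\ge\gamma\|x-x_s\|^2$ for some $\gamma>0$, then the system controlled by the terminal-set EMPC law $\hat\kappa_N$ (with terminal penalty $V_f$ and terminal sets $X^f$) is locally mean square stable.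
   Context: Setting: $\mathcal{N}=\{1,\dots,\nu\}$; $\{\theta_k\}$ a time-homogeneous, irreducible, aperiodic Markov chain on $\mathcal{N}$ with transition matrix $P=(p_{ij})$, $\mathcal{C}(i)=\{j:p_{ij}>0\}$, on a filtered probability space with $\mathfrak{F}_k$ generated by the history up to time $k$; system $x_{k+1}=f(x_k,u_k,\theta_k)$ with constraints $(x_k,u_k)\in Y_{\theta_k}$ ($Y_\theta$ nonempty compact), stage cost $\ell$ (each $\ell(\cdot,\cdot,\theta)$ nonnegative, lower semicontinuous, level-bounded in $u$ locally uniformly in $x$), $f(\cdot,\cdot,\theta)$ continuous; $x_k,\theta_k$ measured at time $k$. There is a common optimal steady state $(x_s,u_s)=(0,0)$ for all modes with optimal steady-state cost $\ell_s$. $\mathcal{B}_\delta=\{x:\|x\|<\delta\}$. A function is $\beta$-smooth if differentiable with $\beta$-Lipschitz gradient (Jacobian). Define $\hat f_\theta(x)=f(x,K_\theta x,\theta)$, $\bar\ell(x,\theta)=\ell(x,K_\theta x,\theta)-\ell(0,0,\theta)$, $A_i=\frac{\partial f}{\partial x}(0,0,i)$, $B_i=\frac{\partial f}{\partial u}(0,0,i)$. For $\alpha>0$, $\ell_q(x,\theta)=\tfrac12(\alpha+\beta_\ell^\theta)\|x\|^2+\nabla\bar\ell(0,\theta)^\top x$, and $V_f(x,i)=\mathbb{E}[\sum_{k=0}^\infty\ell_q(x_k,\theta_k)\mid x_0=x,\theta_0=i]$ along $x_{k+1}=\Gamma_{\theta_k}x_k$. Strict stochastic dissipativity: there are $\lambda:\mathbb{R}^n\times\mathcal{N}\to\mathbb{R}$,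 lower semicontinuous in the first argument, with $\lambda(x_s,\theta)=\lambda_s$ independent of $\theta$, and convex $\rho:\mathbb{R}^n\times\mathcal{N}\to\mathbb{R}_+$ positive definite w.r.t. $x_s$, with $\mathbb{E}[\lambda(x_{k+1},\theta_{k+1})-\lambda(x_k,\theta_k)\mid\mathfrak{F}_k]\le\ell(x_k,u_k,\theta_k)-\ell_s-\rho(x_k,\theta_k)$ for all states, inputs and modes. UPI: $\{C_i\}$ is UPI for a constrained closed-loop system if $x_k\in C_{\theta_k}$ implies $x_{k+1}\in C_{\theta_{k+1}}$, constraints satisfied. Terminal-set EMPC: $\hat\kappa_N(x,\theta)$ is the first element of an optimal policy of minimizing $\mathbb{E}[V_f(x_N,\theta_N)+\sum_{j=0}^{N-1}\ell(x_j,u_j,\theta_j)\mid\mathfrak{F}_0]$ subject to $x_{k+1}=f(x_k,u_k,\theta_k)$, $(x_k,u_k)\in Y_{\theta_k}$, $(x_0,\theta_0)=(x,\theta)$, $x_N\in X^f_{\theta_N}$, $u_k$ $\mathfrak{F}_k$-measurable. Mean square stability means $\mathbb{E}\|x_k\|^2\to0$ as $k\to\infty$. *)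

theory Defs
  imports "HOL-Analysis.Analysis"
begin

definition lsc :: "('a::topological_space \<Rightarrow> real) \<Rightarrow> bool" where
  "lsc F \<longleftrightarrow> (\<forall>x c. c < F x \<longrightarrow> (\<forall>\<^sub>F y in nhds x. c < F y))"

definition level_bounded_loc_unif ::
  "('x::real_normed_vector \<Rightarrow> 'u::real_normed_vector \<Rightarrow> real) \<Rightarrow> bool" where
  "level_bounded_loc_unif L \<longleftrightarrow>
     (\<forall>x0 c. \<exists>V. open V \<and> x0 \<in> V \<and> bounded {(x, u). x \<in> V \<and> L x u \<le> c})"

definition smooth_scalar :: "real \<Rightarrow> ('a::euclidean_space \<Rightarrow> real) \<Rightarrow> bool" where
  "smooth_scalar \<beta> F \<longleftrightarrow> (\<exists>g. (\<forall>x. (F has_derivative (\<lambda>h. g x \<bullet> h)) (at x)) \<and>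
                                  (\<forall>x y. norm (g x - g y) \<le> \<beta> * norm (x - y)))"

definition smooth_map ::
  "real \<Rightarrow> ('a::euclidean_space \<Rightarrow> 'b::euclidean_space) \<Rightarrow> bool" where
  "smooth_map \<beta> F \<longleftrightarrow> (\<exists>D. (\<forall>x. (F has_derivative D x) (at x)) \<and>
                                (\<forall>x y. onorm (\<lambda>h. D x h - D y h) \<le> \<beta> * norm (x - y)))"

definition grad0 :: "('a::euclidean_space \<Rightarrow> real) \<Rightarrow> 'a" where
  "grad0 F = (THE g. (F has_derivative (\<lambda>h. g \<bullet> h)) (at 0))"

definition stochastic :: "('q::finite \<Rightarrow> 'q \<Rightarrow> real) \<Rightarrow> bool" where
  "stochastic P \<longleftrightarrow> (\<forall>i j. 0 \<le> P i j) \<and> (\<forall>i. (\<Sum>j\<in>UNIV. P i j) = 1)"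

fun Pn :: "('q::finite \<Rightarrow> 'q \<Rightarrow> real) \<Rightarrow> nat \<Rightarrow> 'q \<Rightarrow> 'q \<Rightarrow> real" where
  "Pn P 0 i j = (if i = j then 1 else 0)"
| "Pn P (Suc n) i j = (\<Sum>k\<in>UNIV. Pn P n i k * P k j)"

definition irreducible_chain :: "('q::finite \<Rightarrow> 'q \<Rightarrow> real) \<Rightarrow> bool" where
  "irreducible_chain P \<longleftrightarrow> (\<forall>i j. \<exists>n>0. Pn P n i j > 0)"

definition aperiodic_chain :: "('q::finite \<Rightarrow> 'q \<Rightarrow> real) \<Rightarrow> bool" where
  "aperiodic_chain P \<longleftrightarrow> (\<forall>i. Gcd {n. n > 0 \<and> Pn P n i i > 0} = 1)"

text \<open>Probability of the mode path theta_1..theta_k (given as a list) when theta_0 = i.\<close>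
fun pprob :: "('q \<Rightarrow> 'q \<Rightarrow> real) \<Rightarrow> 'q \<Rightarrow> 'q list \<Rightarrow> real" where
  "pprob P i [] = 1"
| "pprob P i (j # js) = P i j * pprob P j js"

definition paths :: "nat \<Rightarrow> 'q list set" where
  "paths k = {ms. length ms = k}"

text \<open>Expectation, given theta_0 = i, of a quantity depending on the mode history
  theta_0..theta_k (the history is passed as the list i # ms).\<close>
definition Ehist :: "('q::finite \<Rightarrow> 'q \<Rightarrow> real) \<Rightarrow> 'q \<Rightarrow> nat \<Rightarrow> ('q list \<Rightarrow> real) \<Rightarrow> real" where
  "Ehist P i k g = (\<Sum>ms\<in>paths k. pprob P i ms * g (i # ms))"

text \<open>Markov jump linear system z_{k+1} = G_{theta_k} z_k; state x_k along the
  mode path theta_0 = i, theta_1..theta_k = ms.\<close>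
fun lin_state :: "('q \<Rightarrow> real^'n^'n) \<Rightarrow> real^'n \<Rightarrow> 'q \<Rightarrow> 'q list \<Rightarrow> real^'n" where
  "lin_state G x i [] = x"
| "lin_state G x i (j # js) = lin_state G (G i *v x) j js"

definition MJLS_ms_stable :: "('q::finite \<Rightarrow> 'q \<Rightarrow> real) \<Rightarrow> ('q \<Rightarrow> real^'n^'n) \<Rightarrow> bool" where
  "MJLS_ms_stable P G \<longleftrightarrow>
     (\<forall>x i. (\<lambda>k. Ehist P i k (\<lambda>h. (norm (lin_state G x (hd h) (tl h)))\<^sup>2)) \<longlonglongrightarrow> 0)"

definition ms_stabilizable ::
  "('q::finite \<Rightarrow> 'q \<Rightarrow> real) \<Rightarrow> ('q \<Rightarrow> real^'n^'n) \<Rightarrow> ('q \<Rightarrow> real^'m^'n) \<Rightarrow> bool" where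
  "ms_stabilizable P A B \<longleftrightarrow>
     (\<exists>K::'q \<Rightarrow> real^'n^'m. MJLS_ms_stable P (\<lambda>i. A i + B i ** K i))"

text \<open>Nonlinear system under a history-dependent policy pol: the input at time k
  is pol (theta_0..theta_k). State x_k along theta_0 = i, theta_1..theta_k = ms.\<close>
fun pol_state :: "(real^'n \<Rightarrow> real^'m \<Rightarrow> 'q \<Rightarrow> real^'n) \<Rightarrow> ('q list \<Rightarrow> real^'m)
     \<Rightarrow> real^'n \<Rightarrow> 'q \<Rightarrow> 'q list \<Rightarrow> real^'n" where
  "pol_state f pol x i [] = x"
| "pol_state f pol x i (j # js) = pol_state f (\<lambda>h. pol (i # h)) (f x (pol [i]) i) j js"

fun cl_state :: "(real^'n \<Rightarrow> real^'m \<Rightarrow> 'q \<Rightarrow> real^'n) \<Rightarrow> (real^'n \<Rightarrow> 'q \<Rightarrow> real^'m)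
     \<Rightarrow> real^'n \<Rightarrow> 'q \<Rightarrow> 'q list \<Rightarrow> real^'n" where
  "cl_state f kap x i [] = x"
| "cl_state f kap x i (j # js) = cl_state f kap (f x (kap x i) i) j js"

definition fhat :: "(real^'n \<Rightarrow> real^'m \<Rightarrow> 'q \<Rightarrow> real^'n) \<Rightarrow> ('q \<Rightarrow> real^'n^'m)
     \<Rightarrow> 'q \<Rightarrow> real^'n \<Rightarrow> real^'n" where
  "fhat f K i x = f x (K i *v x) i"

definition lbar :: "(real^'n \<Rightarrow> real^'m \<Rightarrow> 'q \<Rightarrow> real) \<Rightarrow> ('q \<Rightarrow> real^'n^'m)
     \<Rightarrow> real^'n \<Rightarrow> 'q \<Rightarrow> real" where
  "lbar l K x i = l x (K i *v x) i - l 0 0 i"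

definition lq :: "(real^'n \<Rightarrow> real^'m \<Rightarrow> 'q \<Rightarrow> real) \<Rightarrow> ('q \<Rightarrow> real^'n^'m) \<Rightarrow> ('q \<Rightarrow> real)
     \<Rightarrow> real \<Rightarrow> real^'n \<Rightarrow> 'q \<Rightarrow> real" where
  "lq l K \<beta>l \<alpha> x i = (\<alpha> + \<beta>l i) / 2 * (norm x)\<^sup>2 + grad0 (\<lambda>y. lbar l K y i) \<bullet> x"

definition Vf :: "('q::finite \<Rightarrow> 'q \<Rightarrow> real) \<Rightarrow> ('q \<Rightarrow> real^'n^'n)
     \<Rightarrow> (real^'n \<Rightarrow> real^'m \<Rightarrow> 'q \<Rightarrow> real) \<Rightarrow> ('q \<Rightarrow> real^'n^'m) \<Rightarrow> ('q \<Rightarrow> real)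
     \<Rightarrow> real \<Rightarrow> real^'n \<Rightarrow> 'q \<Rightarrow> real" where
  "Vf P G l K \<beta>l \<alpha> x i =
     (\<Sum>k. Ehist P i k (\<lambda>h. lq l K \<beta>l \<alpha> (lin_state G x (hd h) (tl h)) (last h)))"

definition UPI :: "('q \<Rightarrow> 'q \<Rightarrow> real) \<Rightarrow> (real^'n \<Rightarrow> real^'m \<Rightarrow> 'q \<Rightarrow> real^'n)
     \<Rightarrow> ('q \<Rightarrow> ((real^'n) \<times> (real^'m)) set) \<Rightarrow> ('q \<Rightarrow> real^'n^'m) \<Rightarrow> ('q \<Rightarrow> (real^'n) set) \<Rightarrow> bool" where
  "UPI P f Y K C \<longleftrightarrow> (\<forall>i x. x \<in> C i \<longrightarrow>
      (x, K i *v x) \<in> Y i \<and> (\<forall>j. P i j > 0 \<longrightarrow> f x (K i *v x) i \<in> C j))"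

text \<open>Admissible policy for the N-step problem from (x,i): constraints hold almost
  surely, i.e. along every mode path of positive probability.\<close>
definition feasible_pol :: "('q::finite \<Rightarrow> 'q \<Rightarrow> real) \<Rightarrow> (real^'n \<Rightarrow> real^'m \<Rightarrow> 'q \<Rightarrow> real^'n)
     \<Rightarrow> ('q \<Rightarrow> ((real^'n) \<times> (real^'m)) set) \<Rightarrow> ('q \<Rightarrow> (real^'n) set) \<Rightarrow> nat
     \<Rightarrow> real^'n \<Rightarrow> 'q \<Rightarrow> ('q list \<Rightarrow> real^'m) \<Rightarrow> bool" where
  "feasible_pol P f Y Xf N x i pol \<longleftrightarrow>
     (\<forall>k<N. \<forall>ms\<in>paths k. pprob P i ms > 0 \<longrightarrow>
        (pol_state f pol x i ms, pol (i # ms)) \<in> Y (last (i # ms))) \<and>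
     (\<forall>ms\<in>paths N. pprob P i ms > 0 \<longrightarrow> pol_state f pol x i ms \<in> Xf (last (i # ms)))"

definition cost_pol :: "('q::finite \<Rightarrow> 'q \<Rightarrow> real) \<Rightarrow> (real^'n \<Rightarrow> real^'m \<Rightarrow> 'q \<Rightarrow> real^'n)
     \<Rightarrow> (real^'n \<Rightarrow> real^'m \<Rightarrow> 'q \<Rightarrow> real) \<Rightarrow> (real^'n \<Rightarrow> 'q \<Rightarrow> real) \<Rightarrow> nat
     \<Rightarrow> real^'n \<Rightarrow> 'q \<Rightarrow> ('q list \<Rightarrow> real^'m) \<Rightarrow> real" where
  "cost_pol P f l V N x i pol =
     Ehist P i N (\<lambda>h. V (pol_state f pol x i (tl h)) (last h)) +
     (\<Sum>k<N. Ehist P i k (\<lambda>h. l (pol_state f pol x i (tl h)) (pol h) (last h)))"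

definition optimal_pol where
  "optimal_pol P f Y Xf l V N x i pol \<longleftrightarrow>
     feasible_pol P f Y Xf N x i pol \<and>
     (\<forall>pol'. feasible_pol P f Y Xf N x i pol' \<longrightarrow>
        cost_pol P f l V N x i pol \<le> cost_pol P f l V N x i pol')"

definition EMPC_law where
  "EMPC_law P f Y Xf l V N kap \<longleftrightarrow>
     (\<forall>x i. (\<exists>pol. feasible_pol P f Y Xf N x i pol) \<longrightarrow>
        (\<exists>pol. optimal_pol P f Y Xf l V N x i pol \<and> kap x i = pol [i]))"

definition loc_ms_stable where
  "loc_ms_stable P f Y Xf N kap \<longleftrightarrow>
     (\<forall>x i. (\<exists>pol. feasible_pol P f Y Xf N x i pol) \<longrightarrow>
        (\<lambda>k. Ehist P i k (\<lambda>h. (norm (cl_state f kap x i (tl h)))\<^sup>2)) \<longlonglongrightarrow> 0)"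

end

theory Submission
  imports Defs
begin

text \<open>
  The terminal cost \<open>Vf\<close> is the expected sum of a quadratic-plus-linear stage cost \<open>lq\<close>
  along the Markov jump linear system \<open>z\<^sub>k\<^sub>+\<^sub>1 = \<Gamma>\<^bsub>\<theta>\<^sub>k\<^esub> z\<^sub>k\<close>. Mean-square stability of this system
  is automatically exponential, so \<open>Vf\<close> is finite, satisfies the Bellman identity
  \<open>E[Vf(\<Gamma>\<^sub>\<theta> x, \<theta>\<^sup>+)] = Vf(x, \<theta>) - lq(x, \<theta>)\<close>, and is locally Lipschitz with a constant of order \<open>|x|\<close>.
  Smoothness gives \<open>fhat\<^sub>\<theta>(x) - \<Gamma>\<^sub>\<theta> x = O(|x|\<^sup>2)\<close> and
  \<open>lbar(x, \<theta>) \<le> \<nabla>lbar(0, \<theta>) \<bullet> x + |\<beta>\<^sub>\<ell>| |x|\<^sup>2\<close>. Replacing \<open>\<Gamma>\<^sub>\<theta> x\<close> by \<open>fhat\<^sub>\<theta>(x)\<close> thus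
  costs \<open>O(|x|\<^sup>2)\<close> with a constant independent of \<open>\<alpha>\<close>, plus an \<open>O(|x|\<^sup>3)\<close> term: choosing first
  \<open>\<alpha>\<close> large and then the ball small makes \<open>Vf\<close> decrease by at least \<open>lbar\<close> under the
  terminal law.

  For the EMPC, the tail of an optimal policy followed by the terminal law \<open>K\<close> is feasible
  from every possible successor (by invariance of the terminal sets), and by the terminal
  decrease its expected cost is at most the optimal cost minus \<open>l - ls\<close>. Adding the storage
  function \<open>\<lambda>\<close> turns this into a drift of at most \<open>-\<rho> \<le> -\<gamma>|x|\<^sup>2\<close> for a function that is bounded
  below on the feasible set, and summing the drift shows \<open>\<Sum>\<^sub>k E|x\<^sub>k|\<^sup>2 < \<infinity>\<close>.
\<close>

section \<open>Expectations over mode paths\<close>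

lemma finite_paths [simp]: "finite (paths k :: 'q::finite list set)"
  using finite_lists_length_eq[of "UNIV::'q set" k] by (simp add: paths_def)

lemma sum_paths_Suc:
  "(\<Sum>ms\<in>paths (Suc k). g ms) = (\<Sum>j\<in>(UNIV::'q::finite set). \<Sum>ms\<in>paths k. g (j # ms))"
proof -
  have img: "paths (Suc k) = (\<lambda>(j, ms). j # ms) ` (UNIV \<times> paths k)"
    by (auto simp: paths_def image_iff length_Suc_conv)
  have inj: "inj_on (\<lambda>(j::'q, ms). j # ms) (UNIV \<times> paths k)"
    by (auto simp: inj_on_def)
  show ?thesis
    unfolding img sum.reindex[OF inj] by (simp add: sum.cartesian_product split_def)
qed

lemma sum_paths_snoc:
  "(\<Sum>ms\<in>paths (Suc k). g ms) = (\<Sum>ms\<in>paths k. \<Sum>j\<in>(UNIV::'q::finite set). g (ms @ [j]))"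
proof -
  have img: "paths (Suc k) = (\<lambda>(ms, j). ms @ [j]) ` (paths k \<times> UNIV)"
    by (auto simp: paths_def image_iff) (metis length_Suc_conv_rev)
  have inj: "inj_on (\<lambda>(ms, j::'q). ms @ [j]) (paths k \<times> UNIV)"
    by (auto simp: inj_on_def)
  show ?thesis
    unfolding img sum.reindex[OF inj] by (simp add: sum.cartesian_product split_def)
qed

lemma pprob_snoc: "pprob P i (ms @ [j]) = pprob P i ms * P (last (i # ms)) j"
  by (induction ms arbitrary: i) auto

lemma pprob_nonneg: "stochastic P \<Longrightarrow> 0 \<le> pprob P i ms"
  by (induction ms arbitrary: i) (auto simp: stochastic_def)

lemma pprob_snoc_pos:
  assumes "stochastic P" and "0 < pprob P i (ms @ [j])"
  shows "0 < pprob P i ms" and "0 < P (last (i # ms)) j"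
  using assms pprob_nonneg[OF assms(1), of i ms]
  by (auto simp: pprob_snoc stochastic_def zero_less_mult_iff)

lemma sum_pprob: "stochastic P \<Longrightarrow> (\<Sum>ms\<in>paths k. pprob P i ms) = 1"
proof (induction k arbitrary: i)
  case 0
  then show ?case by (simp add: paths_def)
next
  case (Suc k)
  then show ?case
    by (simp add: sum_paths_Suc flip: sum_distrib_left) (simp add: stochastic_def)
qed

lemma Ehist_0 [simp]: "Ehist P i 0 g = g [i]"
  by (simp add: Ehist_def paths_def)

lemma Ehist_Suc: "Ehist P i (Suc k) g = (\<Sum>j\<in>UNIV. P i j * Ehist P j k (\<lambda>h. g (i # h)))"
  unfolding Ehist_def by (simp add: sum_paths_Suc sum_distrib_left mult.assoc)

lemma Ehist_snoc:
  "Ehist P i (Suc k) g = Ehist P i k (\<lambda>h. \<Sum>j\<in>UNIV. P (last h) j * g (h @ [j]))"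
  unfolding Ehist_def by (simp add: sum_paths_snoc sum_distrib_left pprob_snoc mult.assoc)

lemma Ehist_cong:
  "(\<And>ms. ms \<in> paths k \<Longrightarrow> g (i # ms) = g' (i # ms)) \<Longrightarrow> Ehist P i k g = Ehist P i k g'"
  unfolding Ehist_def by (rule sum.cong) auto

lemma Ehist_mono_AE:
  fixes P :: "'q::finite \<Rightarrow> 'q \<Rightarrow> real"
  assumes "stochastic P"
    and "\<And>ms. ms \<in> paths k \<Longrightarrow> 0 < pprob P i ms \<Longrightarrow> g (i # ms) \<le> g' (i # ms)"
  shows "Ehist P i k g \<le> Ehist P i k g'"
  unfolding Ehist_def
proof (rule sum_mono)
  fix ms :: "'q list" assume "ms \<in> paths k"
  with assms show "pprob P i ms * g (i # ms) \<le> pprob P i ms * g' (i # ms)"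
    using pprob_nonneg[OF assms(1), of i ms] by (cases "pprob P i ms = 0") auto
qed

lemma Ehist_mono:
  "stochastic P \<Longrightarrow> (\<And>ms. g (i # ms) \<le> g' (i # ms)) \<Longrightarrow> Ehist P i k g \<le> Ehist P i k g'"
  by (rule Ehist_mono_AE)

lemma Ehist_add: "Ehist P i k (\<lambda>h. g h + g' h) = Ehist P i k g + Ehist P i k g'"
  unfolding Ehist_def by (simp add: distrib_left sum.distrib)

lemma Ehist_diff: "Ehist P i k (\<lambda>h. g h - g' h) = Ehist P i k g - Ehist P i k g'"
  unfolding Ehist_def by (simp add: right_diff_distrib sum_subtractf)

lemma Ehist_cmult: "Ehist P i k (\<lambda>h. c * g h) = c * Ehist P i k g"
  unfolding Ehist_def by (simp add: sum_distrib_left algebra_simps)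

lemma Ehist_sum: "Ehist P i k (\<lambda>h. \<Sum>a\<in>A. g a h) = (\<Sum>a\<in>A. Ehist P i k (g a))"
  unfolding Ehist_def by (simp add: sum_distrib_left sum.swap[of _ A])

lemma Ehist_const: "stochastic P \<Longrightarrow> Ehist P i k (\<lambda>h. c) = c"
  unfolding Ehist_def by (simp add: sum_pprob flip: sum_distrib_right)

lemma Ehist_nonneg: "stochastic P \<Longrightarrow> (\<And>ms. 0 \<le> g (i # ms)) \<Longrightarrow> 0 \<le> Ehist P i k g"
  unfolding Ehist_def by (intro sum_nonneg mult_nonneg_nonneg pprob_nonneg) auto

lemma Ehist_abs: "stochastic P \<Longrightarrow> \<bar>Ehist P i k g\<bar> \<le> Ehist P i k (\<lambda>h. \<bar>g h\<bar>)"
  unfolding Ehist_def by (rule order_trans[OF sum_abs]) (simp add: abs_mult pprob_nonneg)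

lemma Ehist_Cauchy_Schwarz:
  assumes "stochastic P"
  shows "Ehist P i k (\<lambda>h. a h * b h)
           \<le> sqrt (Ehist P i k (\<lambda>h. (a h)\<^sup>2)) * sqrt (Ehist P i k (\<lambda>h. (b h)\<^sup>2))"
proof -
  let ?p = "\<lambda>ms. sqrt (pprob P i ms)"
  have p: "0 \<le> pprob P i ms" for ms
    using pprob_nonneg[OF assms] .
  have "Ehist P i k (\<lambda>h. a h * b h) = (\<Sum>ms\<in>paths k. (?p ms * a (i # ms)) * (?p ms * b (i # ms)))"
    unfolding Ehist_def by (rule sum.cong) (auto simp: p real_sqrt_mult[symmetric] algebra_simps)
  also have "(\<dots>)\<^sup>2 \<le> (\<Sum>ms\<in>paths k. (?p ms * a (i # ms))\<^sup>2) * (\<Sum>ms\<in>paths k. (?p ms * b (i # ms))\<^sup>2)"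
    by (rule Cauchy_Schwarz_ineq_sum)
  also have "\<dots> = Ehist P i k (\<lambda>h. (a h)\<^sup>2) * Ehist P i k (\<lambda>h. (b h)\<^sup>2)"
    unfolding Ehist_def by (simp add: power_mult_distrib p)
  finally show ?thesis
    by (metis real_le_rsqrt real_sqrt_mult)
qed

lemma Ehist_le_sqrt_second_moment:
  "stochastic P \<Longrightarrow> Ehist P i k a \<le> sqrt (Ehist P i k (\<lambda>h. (a h)\<^sup>2))"
  using Ehist_Cauchy_Schwarz[of P i k a "\<lambda>_. 1"] by (simp add: Ehist_const)

section \<open>Exponential mean-square stability of Markov jump linear systems\<close>

fun trans_mat :: "('q \<Rightarrow> real^'n^'n) \<Rightarrow> 'q \<Rightarrow> 'q list \<Rightarrow> real^'n^'n" where
  "trans_mat G i [] = mat 1"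
| "trans_mat G i (j # js) = trans_mat G j js ** G i"

lemma lin_state_eq_trans_mat: "lin_state G v i ms = trans_mat G i ms *v v"
  by (induction ms arbitrary: v i) (auto simp: matrix_vector_mul_assoc)

lemma lin_state_diff: "lin_state G (a - b) i ms = lin_state G a i ms - lin_state G b i ms"
  by (simp add: lin_state_eq_trans_mat matrix_vector_mult_diff_distrib)

lemma lin_state_add: "lin_state G (a + b) i ms = lin_state G a i ms + lin_state G b i ms"
  by (simp add: lin_state_eq_trans_mat matrix_vector_right_distrib)

lemma lin_state_zero [simp]: "lin_state G 0 i ms = 0"
  by (simp add: lin_state_eq_trans_mat)

definition second_moment ::
  "('q::finite \<Rightarrow> 'q \<Rightarrow> real) \<Rightarrow> ('q \<Rightarrow> real^'n^'n) \<Rightarrow> nat \<Rightarrow> 'q \<Rightarrow> real^'n \<Rightarrow> real" where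
  "second_moment P G k i v = Ehist P i k (\<lambda>h. (norm (lin_state G v (hd h) (tl h)))\<^sup>2)"

lemma second_moment_nonneg: "stochastic P \<Longrightarrow> 0 \<le> second_moment P G k i v"
  unfolding second_moment_def by (rule Ehist_nonneg) auto

lemma second_moment_0 [simp]: "second_moment P G 0 i v = (norm v)\<^sup>2"
  by (simp add: second_moment_def)

lemma second_moment_Suc:
  "second_moment P G (Suc k) i v = (\<Sum>j\<in>UNIV. P i j * second_moment P G k j (G i *v v))"
  by (simp add: second_moment_def Ehist_Suc) (simp add: Ehist_def)

lemma norm_matrix_vector_le_sum_columns:
  fixes M :: "real^'n^'m"
  shows "norm (M *v v) \<le> norm v * (\<Sum>a\<in>UNIV. norm (M *v axis a 1))"
proof -
  have "M *v v = (\<Sum>a\<in>UNIV. (v$a) *\<^sub>R (M *v axis a 1))"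
    by (metis (no_types, lifting) basis_expansion linear_sum matrix_vector_mul_linear
        matrix_vector_mult_scaleR scalar_mult_eq_scaleR sum.cong)
  then have "norm (M *v v) \<le> (\<Sum>a\<in>UNIV. norm ((v$a) *\<^sub>R (M *v axis a 1)))"
    by (metis norm_sum)
  also have "\<dots> \<le> (\<Sum>a\<in>UNIV. norm v * norm (M *v axis a 1))"
    by (rule sum_mono) (simp add: mult_right_mono component_le_norm_cart)
  finally show ?thesis by (simp add: sum_distrib_left)
qed

definition moment_gain :: "('q::finite \<Rightarrow> 'q \<Rightarrow> real) \<Rightarrow> ('q \<Rightarrow> real^'n^'n) \<Rightarrow> nat \<Rightarrow> real" where
  "moment_gain P G k = real CARD('n) * (\<Sum>i\<in>UNIV. \<Sum>a\<in>UNIV. second_moment P G k i (axis a 1))"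

lemma moment_gain_nonneg: "stochastic P \<Longrightarrow> 0 \<le> moment_gain P G k"
  unfolding moment_gain_def by (intro mult_nonneg_nonneg sum_nonneg second_moment_nonneg) auto

lemma second_moment_le_moment_gain:
  fixes v :: "real^'n" and P :: "'q::finite \<Rightarrow> 'q \<Rightarrow> real"
  assumes sto: "stochastic P"
  shows "second_moment P G k i v \<le> moment_gain P G k * (norm v)\<^sup>2"
proof -
  let ?col = "\<lambda>h a. (norm (lin_state G (axis a 1) (hd h) (tl h)))\<^sup>2"
  have pointwise: "(norm (lin_state G v (hd h) (tl h)))\<^sup>2
                     \<le> (norm v)\<^sup>2 * (real CARD('n) * (\<Sum>a\<in>UNIV. ?col h a))" for h
  proof -
    let ?M = "trans_mat G (hd h) (tl h)"
    have "(norm (?M *v v))\<^sup>2 \<le> (norm v * (\<Sum>a\<in>UNIV. norm (?M *v axis a 1)))\<^sup>2"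
      by (simp add: power_mono norm_matrix_vector_le_sum_columns)
    also have "\<dots> \<le> (norm v)\<^sup>2 * ((\<Sum>a\<in>UNIV. (norm (?M *v axis a 1))\<^sup>2) * real CARD('n))"
      unfolding power_mult_distrib by (rule mult_left_mono[OF sum_squared_le_sum_of_squares]) simp
    finally show ?thesis by (simp add: lin_state_eq_trans_mat mult_ac)
  qed
  have "(\<Sum>a\<in>UNIV. second_moment P G k i (axis a 1))
          \<le> (\<Sum>i\<in>UNIV. \<Sum>a\<in>UNIV. second_moment P G k i (axis a 1))"
    by (rule member_le_sum) (auto intro!: sum_nonneg second_moment_nonneg sto)
  then have "(norm v)\<^sup>2 * (real CARD('n) * (\<Sum>a\<in>UNIV. second_moment P G k i (axis a 1)))
               \<le> moment_gain P G k * (norm v)\<^sup>2"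
    unfolding moment_gain_def by (simp add: mult_left_mono mult_ac)
  moreover have "second_moment P G k i v
      \<le> (norm v)\<^sup>2 * (real CARD('n) * (\<Sum>a\<in>UNIV. second_moment P G k i (axis a 1)))"
    unfolding second_moment_def
    by (rule order_trans[OF Ehist_mono[OF sto pointwise]]) (simp add: Ehist_cmult Ehist_sum)
  ultimately show ?thesis by linarith
qed

lemma moment_gain_tendsto_0: "MJLS_ms_stable P G \<Longrightarrow> moment_gain P G \<longlonglongrightarrow> 0"
  unfolding moment_gain_def MJLS_ms_stable_def second_moment_def
  by (auto intro!: tendsto_mult_right_zero tendsto_null_sum)

lemma second_moment_add_le:
  fixes P :: "'q::finite \<Rightarrow> 'q \<Rightarrow> real"
  assumes sto: "stochastic P"
  shows "second_moment P G (k + n) i v \<le> moment_gain P G n * second_moment P G k i v"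
proof (induction k arbitrary: i v)
  case 0
  then show ?case using second_moment_le_moment_gain[OF sto] by simp
next
  case (Suc k)
  have "second_moment P G (Suc k + n) i v
          \<le> (\<Sum>j\<in>UNIV. P i j * (moment_gain P G n * second_moment P G k j (G i *v v)))"
    unfolding add_Suc second_moment_Suc
    by (intro sum_mono mult_left_mono Suc) (use sto in \<open>auto simp: stochastic_def\<close>)
  then show ?case
    by (simp add: second_moment_Suc sum_distrib_left mult_ac)
qed

text \<open>Mean-square stability is automatically exponential: once the gain over some horizon
  \<open>n\<^sub>0\<close> is below \<open>1/2\<close>, the second moment halves every \<open>n\<^sub>0\<close> steps.\<close>

lemma MJLS_ms_stable_exponential:
  fixes P :: "'q::finite \<Rightarrow> 'q \<Rightarrow> real"
  assumes sto: "stochastic P" and stable: "MJLS_ms_stable P G"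
  obtains C r where "0 \<le> C" "0 < r" "r < 1"
    "\<And>k i v. second_moment P G k i v \<le> C * r ^ k * (norm v)\<^sup>2"
proof -
  obtain n0 where n0: "0 < n0" "moment_gain P G n0 \<le> 1/2"
  proof -
    have "eventually (\<lambda>k. moment_gain P G k < 1/2) sequentially"
      using moment_gain_tendsto_0[OF stable] by (rule order_tendstoD) simp
    then obtain k0 where "\<And>k. k \<ge> k0 \<Longrightarrow> moment_gain P G k < 1/2"
      by (auto simp: eventually_sequentially)
    then have "moment_gain P G (Suc k0) < 1/2" by simp
    then show thesis using that[of "Suc k0"] by simp
  qed
  define C where "C = Max (moment_gain P G ` {..<n0})"
  have C: "moment_gain P G s \<le> C" if "s < n0" for s
    unfolding C_def using that by (intro Max_ge) auto
  have C0: "0 \<le> C"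
    using C[of 0] moment_gain_nonneg[OF sto, of G 0] n0 by linarith
  have periodic: "second_moment P G (q * n0 + s) i v \<le> (1/2)^q * (C * (norm v)\<^sup>2)"
    if "s < n0" for q s i v
  proof (induction q arbitrary: i v)
    case 0
    show ?case
      using second_moment_le_moment_gain[OF sto, of G s i v] C[OF that]
      by (simp add: order_trans mult_right_mono)
  next
    case (Suc q)
    have "second_moment P G (Suc q * n0 + s) i v
            \<le> moment_gain P G n0 * second_moment P G (q * n0 + s) i v"
      using second_moment_add_le[OF sto, of G "q * n0 + s" n0] by (simp add: algebra_simps)
    also have "\<dots> \<le> (1/2) * ((1/2)^q * (C * (norm v)\<^sup>2))"
      using Suc[of i v] n0(2) moment_gain_nonneg[OF sto, of G n0] second_moment_nonneg[OF sto]
      by (intro mult_mono) auto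
    finally show ?case by simp
  qed
  define r where "r = root n0 (1/2)"
  have r: "0 < r" "r < 1" "r ^ n0 = 1/2"
    using n0(1) by (auto simp: r_def real_root_lt_1_iff)
  have half_power: "(1/2::real) ^ (k div n0) \<le> 2 * r ^ k" for k
  proof -
    have "r ^ k = (1/2) ^ (k div n0) * r ^ (k mod n0)"
      by (metis r(3) mult.commute power_add power_mult div_mult_mod_eq)
    also have "\<dots> \<ge> (1/2) ^ (k div n0) * r ^ n0"
      using r n0(1) by (intro mult_left_mono power_decreasing) auto
    finally show ?thesis using r(3) by simp
  qed
  show thesis
  proof (rule that[of "2 * C" r])
    fix k i v
    have "second_moment P G k i v \<le> (1/2)^(k div n0) * (C * (norm v)\<^sup>2)"
      using periodic[of "k mod n0" "k div n0" i v] n0(1) by simp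
    also have "\<dots> \<le> (2 * r ^ k) * (C * (norm v)\<^sup>2)"
      using half_power C0 by (intro mult_right_mono) auto
    finally show "second_moment P G k i v \<le> 2 * C * r ^ k * (norm v)\<^sup>2"
      by (simp add: mult_ac)
  qed (use C0 r in auto)
qed

section \<open>Expected quadratic costs along a Markov jump linear system\<close>

definition quad_cost :: "('q \<Rightarrow> real) \<Rightarrow> ('q \<Rightarrow> real^'n) \<Rightarrow> real^'n \<Rightarrow> 'q \<Rightarrow> real" where
  "quad_cost a c z \<theta> = a \<theta> * (norm z)\<^sup>2 + c \<theta> \<bullet> z"

definition expected_quad_cost :: "('q::finite \<Rightarrow> 'q \<Rightarrow> real) \<Rightarrow> ('q \<Rightarrow> real^'n^'n)
    \<Rightarrow> ('q \<Rightarrow> real) \<Rightarrow> ('q \<Rightarrow> real^'n) \<Rightarrow> nat \<Rightarrow> real^'n \<Rightarrow> 'q \<Rightarrow> real" where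
  "expected_quad_cost P G a c k v i =
     Ehist P i k (\<lambda>h. quad_cost a c (lin_state G v (hd h) (tl h)) (last h))"

lemma expected_quad_cost_zero [simp]: "expected_quad_cost P G a c k 0 i = 0"
  by (simp add: expected_quad_cost_def Ehist_def quad_cost_def)

lemma expected_quad_cost_0: "expected_quad_cost P G a c 0 v i = quad_cost a c v i"
  by (simp add: expected_quad_cost_def)

lemma expected_quad_cost_Suc:
  "expected_quad_cost P G a c (Suc k) v i = (\<Sum>j\<in>UNIV. P i j * expected_quad_cost P G a c k (G i *v v) j)"
  by (simp add: expected_quad_cost_def Ehist_Suc) (simp add: Ehist_def)

lemma quad_cost_diff_le:
  fixes a :: "'q::finite \<Rightarrow> real"
  shows "\<bar>quad_cost a c z \<theta> - quad_cost a c z' \<theta>\<bar>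
           \<le> (\<Sum>t\<in>UNIV. \<bar>a t\<bar>) * (norm (z - z') * norm (z + z')) + (\<Sum>t\<in>UNIV. norm (c t)) * norm (z - z')"
proof -
  have "quad_cost a c z \<theta> - quad_cost a c z' \<theta> = a \<theta> * ((z - z') \<bullet> (z + z')) + c \<theta> \<bullet> (z - z')"
    unfolding quad_cost_def power2_norm_eq_inner by (simp add: algebra_simps inner_commute)
  moreover have "\<bar>a \<theta> * ((z - z') \<bullet> (z + z'))\<bar> \<le> (\<Sum>t\<in>UNIV. \<bar>a t\<bar>) * (norm (z - z') * norm (z + z'))"
    unfolding abs_mult by (intro mult_mono member_le_sum Cauchy_Schwarz_ineq2) auto
  moreover have "\<bar>c \<theta> \<bullet> (z - z')\<bar> \<le> (\<Sum>t\<in>UNIV. norm (c t)) * norm (z - z')"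
    by (rule order_trans[OF Cauchy_Schwarz_ineq2]) (intro mult_right_mono member_le_sum, auto)
  ultimately show ?thesis by linarith
qed

definition quad_cost_series :: "('q::finite \<Rightarrow> 'q \<Rightarrow> real) \<Rightarrow> ('q \<Rightarrow> real^'n^'n)
    \<Rightarrow> ('q \<Rightarrow> real) \<Rightarrow> ('q \<Rightarrow> real^'n) \<Rightarrow> real^'n \<Rightarrow> 'q \<Rightarrow> real" where
  "quad_cost_series P G a c v i = (\<Sum>k. expected_quad_cost P G a c k v i)"

lemma Vf_eq_quad_cost_series:
  "Vf P G l K \<beta>l \<alpha> = quad_cost_series P G (\<lambda>\<theta>. (\<alpha> + \<beta>l \<theta>) / 2) (\<lambda>\<theta>. grad0 (\<lambda>y. lbar l K y \<theta>))"
  by (simp add: fun_eq_iff Vf_def quad_cost_series_def expected_quad_cost_def quad_cost_def lq_def)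

lemma lq_eq_quad_cost:
  "lq l K \<beta>l \<alpha> = quad_cost (\<lambda>\<theta>. (\<alpha> + \<beta>l \<theta>) / 2) (\<lambda>\<theta>. grad0 (\<lambda>y. lbar l K y \<theta>))"
  by (simp add: fun_eq_iff quad_cost_def lq_def)

context
  fixes P :: "'q::finite \<Rightarrow> 'q \<Rightarrow> real" and G :: "'q \<Rightarrow> real^'n^'n" and C r :: real
  assumes sto: "stochastic P" and C: "0 \<le> C" and r: "0 < r" "r < 1"
    and exp_stable: "\<And>k i v. second_moment P G k i v \<le> C * r ^ k * (norm v)\<^sup>2"
begin

text \<open>Both factors of the difference of squares are controlled by Cauchy--Schwarz in
  the path expectation, so the quadratic part decays like \<open>r\<^sup>k\<close> and the linear part like
  \<open>sqrt r ^ k\<close>.\<close>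

lemma expected_quad_cost_diff_le:
  "\<bar>expected_quad_cost P G a c k y i - expected_quad_cost P G a c k y' i\<bar>
     \<le> (\<Sum>t\<in>UNIV. \<bar>a t\<bar>) * (C * r ^ k * (norm (y - y') * norm (y + y')))
       + (\<Sum>t\<in>UNIV. norm (c t)) * (sqrt C * sqrt r ^ k * norm (y - y'))"
proof -
  define SA where "SA = (\<Sum>t\<in>UNIV. \<bar>a t\<bar>)"
  define SC where "SC = (\<Sum>t\<in>UNIV. norm (c t))"
  let ?z = "\<lambda>v h. lin_state G v (hd h) (tl h)"
  let ?d = "\<lambda>h. norm (?z (y - y') h)" and ?s = "\<lambda>h. norm (?z (y + y') h)"
  have bound_d: "Ehist P i k ?d \<le> sqrt C * sqrt r ^ k * norm (y - y')"
  proof -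
    have "Ehist P i k ?d \<le> sqrt (C * r ^ k * (norm (y - y'))\<^sup>2)"
      using Ehist_le_sqrt_second_moment[OF sto, of i k ?d] exp_stable[of k i "y - y'"]
      by (simp add: second_moment_def order_trans)
    then show ?thesis using C r by (simp add: real_sqrt_mult real_sqrt_power)
  qed
  have bound_ds: "Ehist P i k (\<lambda>h. ?d h * ?s h) \<le> C * r ^ k * (norm (y - y') * norm (y + y'))"
  proof -
    have "Ehist P i k (\<lambda>h. ?d h * ?s h)
            \<le> sqrt (second_moment P G k i (y - y')) * sqrt (second_moment P G k i (y + y'))"
      unfolding second_moment_def by (rule Ehist_Cauchy_Schwarz[OF sto])
    also have "\<dots> \<le> sqrt (C * r ^ k * (norm (y - y'))\<^sup>2) * sqrt (C * r ^ k * (norm (y + y'))\<^sup>2)"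
      by (intro mult_mono real_sqrt_le_mono exp_stable)
         (use C r in \<open>auto simp: second_moment_nonneg[OF sto]\<close>)
    also have "\<dots> = C * r ^ k * (norm (y - y') * norm (y + y'))"
      using C r by (simp add: real_sqrt_mult real_sqrt_power[symmetric] mult_ac)
    finally show ?thesis .
  qed
  have "\<bar>expected_quad_cost P G a c k y i - expected_quad_cost P G a c k y' i\<bar>
          \<le> Ehist P i k (\<lambda>h. \<bar>quad_cost a c (?z y h) (last h) - quad_cost a c (?z y' h) (last h)\<bar>)"
    unfolding expected_quad_cost_def Ehist_diff[symmetric] by (rule Ehist_abs[OF sto])
  also have "\<dots> \<le> Ehist P i k (\<lambda>h. SA * (?d h * ?s h) + SC * ?d h)"
    by (rule Ehist_mono[OF sto])
       (use quad_cost_diff_le[of a c] in \<open>simp add: SA_def SC_def lin_state_diff lin_state_add\<close>)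
  also have "\<dots> = SA * Ehist P i k (\<lambda>h. ?d h * ?s h) + SC * Ehist P i k ?d"
    by (simp add: Ehist_add Ehist_cmult)
  also have "\<dots> \<le> SA * (C * r ^ k * (norm (y - y') * norm (y + y')))
                   + SC * (sqrt C * sqrt r ^ k * norm (y - y'))"
    unfolding SA_def SC_def
    by (intro add_mono mult_left_mono bound_d bound_ds sum_nonneg) auto
  finally show ?thesis unfolding SA_def SC_def .
qed

lemma
  shows summable_expected_quad_cost: "summable (\<lambda>k. expected_quad_cost P G a c k y i)"
    and quad_cost_series_diff_le: "\<bar>quad_cost_series P G a c y i - quad_cost_series P G a c y' i\<bar>
     \<le> (\<Sum>t\<in>UNIV. \<bar>a t\<bar>) * (C / (1 - r)) * (norm (y - y') * norm (y + y'))
       + (\<Sum>t\<in>UNIV. norm (c t)) * (sqrt C / (1 - sqrt r)) * norm (y - y')"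
    (is "?diff \<le> ?bound")
proof -
  define b where "b (y::real^'n) y' k = (\<Sum>t\<in>UNIV. \<bar>a t\<bar>) * (C * r ^ k * (norm (y - y') * norm (y + y')))
                        + (\<Sum>t\<in>UNIV. norm (c t)) * (sqrt C * sqrt r ^ k * norm (y - y'))" for y y' k
  have sums_b: "b y y' sums ((\<Sum>t\<in>UNIV. \<bar>a t\<bar>) * (C / (1 - r)) * (norm (y - y') * norm (y + y'))
                    + (\<Sum>t\<in>UNIV. norm (c t)) * (sqrt C / (1 - sqrt r)) * norm (y - y'))" for y y'
  proof -
    have "(\<lambda>k. r ^ k) sums (1 / (1 - r))" "(\<lambda>k. sqrt r ^ k) sums (1 / (1 - sqrt r))"
      using r by (auto intro!: geometric_sums)
    then have "(\<lambda>k. A * r ^ k + B * sqrt r ^ k) sums (A * (1 / (1 - r)) + B * (1 / (1 - sqrt r)))"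
      for A B by (intro sums_add sums_mult)
    from this[of "(\<Sum>t\<in>UNIV. \<bar>a t\<bar>) * (C * (norm (y - y') * norm (y + y')))"
                 "(\<Sum>t\<in>UNIV. norm (c t)) * (sqrt C * norm (y - y'))"]
    show ?thesis unfolding b_def by (simp add: ac_simps)
  qed
  have b: "\<bar>expected_quad_cost P G a c k y i - expected_quad_cost P G a c k y' i\<bar> \<le> b y y' k"
    for y y' :: "real^'n" and k
    unfolding b_def by (rule expected_quad_cost_diff_le)
  have summable: "summable (\<lambda>k. expected_quad_cost P G a c k y i)" for y :: "real^'n"
    by (rule summable_comparison_test[OF _ sums_summable[OF sums_b[of y 0]]])
       (use b[of _ y 0] in auto)
  then show "summable (\<lambda>k. expected_quad_cost P G a c k y i)" .
  have "?diff = \<bar>\<Sum>k. expected_quad_cost P G a c k y i - expected_quad_cost P G a c k y' i\<bar>"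
    unfolding quad_cost_series_def using suminf_diff[OF summable summable] by simp
  also have "\<dots> \<le> ?bound"
    using norm_sums_le[OF summable_sums[OF summable_diff[OF summable summable]] sums_b] b
    by simp
  finally show "?diff \<le> ?bound" .
qed

lemma quad_cost_series_Bellman:
  "(\<Sum>j\<in>UNIV. P i j * quad_cost_series P G a c (G i *v v) j)
     = quad_cost_series P G a c v i - quad_cost a c v i"
proof -
  note summable = summable_expected_quad_cost
  have "quad_cost_series P G a c v i
          = quad_cost a c v i + (\<Sum>k. expected_quad_cost P G a c (Suc k) v i)"
    unfolding quad_cost_series_def
    using suminf_split_head[OF summable] by (simp add: expected_quad_cost_0)
  also have "(\<Sum>k. expected_quad_cost P G a c (Suc k) v i)
               = (\<Sum>j\<in>UNIV. \<Sum>k. P i j * expected_quad_cost P G a c k (G i *v v) j)"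
    unfolding expected_quad_cost_Suc by (rule suminf_sum) (intro summable_mult summable)
  also have "\<dots> = (\<Sum>j\<in>UNIV. P i j * quad_cost_series P G a c (G i *v v) j)"
    unfolding quad_cost_series_def by (intro sum.cong refl suminf_mult[OF summable])
  finally show ?thesis by simp
qed

end

section \<open>The terminal cost decreases near the steady state\<close>

lemma smooth_map_linearization_error:
  fixes F :: "'a::euclidean_space \<Rightarrow> 'b::euclidean_space"
  assumes smooth: "smooth_map \<beta> F" and deriv: "(F has_derivative L) (at 0)"
  shows "norm (F x - F 0 - L x) \<le> \<bar>\<beta>\<bar> * (norm x)\<^sup>2"
proof -
  obtain D where D: "\<And>x. (F has_derivative D x) (at x)"
    and Lip: "\<And>x y. onorm (\<lambda>h. D x h - D y h) \<le> \<beta> * norm (x - y)"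
    using smooth unfolding smooth_map_def by blast
  have "D 0 = L"
    by (rule has_derivative_unique[OF D deriv])
  moreover have "norm (F x - F 0 - D 0 (x - 0)) \<le> norm (x - 0) * (\<bar>\<beta>\<bar> * norm x)"
  proof (rule differentiable_bound_linearization[where S="cball 0 (norm x)" and f'=D])
    fix t :: real assume "t \<in> {0..1}"
    then show "0 + t *\<^sub>R (x - 0) \<in> cball 0 (norm x)" by (auto simp: mult_left_le_one_le)
  next
    fix y assume y: "y \<in> cball (0::'a) (norm x)"
    have "onorm (D y - D 0) \<le> \<beta> * norm (y - 0)"
      using Lip[of y 0] by (simp add: fun_diff_def)
    also have "\<dots> \<le> \<bar>\<beta>\<bar> * norm x" using y by (intro mult_mono) auto
    finally show "onorm (D y - D 0) \<le> \<bar>\<beta>\<bar> * norm x" .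
  qed (auto intro: has_derivative_at_withinI D)
  ultimately show ?thesis by (simp add: power2_eq_square mult_ac)
qed

lemma smooth_scalar_linearization_error:
  fixes F :: "'a::euclidean_space \<Rightarrow> real"
  assumes smooth: "smooth_scalar \<beta> F"
  shows "\<bar>F x - F 0 - grad0 F \<bullet> x\<bar> \<le> \<bar>\<beta>\<bar> * (norm x)\<^sup>2"
proof -
  obtain g where g: "\<And>x. (F has_derivative (\<lambda>h. g x \<bullet> h)) (at x)"
    and Lip: "\<And>x y. norm (g x - g y) \<le> \<beta> * norm (x - y)"
    using smooth unfolding smooth_scalar_def by blast
  have "grad0 F = g 0"
    unfolding grad0_def
  proof (rule the_equality)
    fix g' assume "(F has_derivative (\<lambda>h. g' \<bullet> h)) (at 0)"
    from has_derivative_unique[OF this g] have "(g' - g 0) \<bullet> h = 0" for h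
      by (metis inner_diff_left right_minus_eq)
    from this[of "g' - g 0"] show "g' = g 0" by simp
  qed (rule g)
  moreover have "norm (F x - F 0 - g 0 \<bullet> (x - 0)) \<le> norm (x - 0) * (\<bar>\<beta>\<bar> * norm x)"
  proof (rule differentiable_bound_linearization[where S="cball 0 (norm x)" and f'="\<lambda>y h. g y \<bullet> h"])
    fix y assume y: "y \<in> cball (0::'a) (norm x)"
    have "onorm ((\<lambda>h. g y \<bullet> h) - (\<lambda>h. g 0 \<bullet> h)) \<le> norm (g y - g 0)"
      by (rule onorm_le) (simp add: fun_diff_def Cauchy_Schwarz_ineq2 flip: inner_diff_left)
    also have "\<dots> \<le> \<beta> * norm (y - 0)" by (rule Lip)
    also have "\<dots> \<le> \<bar>\<beta>\<bar> * norm x" using y by (intro mult_mono) auto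
    finally show "onorm ((\<lambda>h. g y \<bullet> h) - (\<lambda>h. g 0 \<bullet> h)) \<le> \<bar>\<beta>\<bar> * norm x" .
  next
    fix t :: real assume "t \<in> {0..1}"
    then show "0 + t *\<^sub>R (x - 0) \<in> cball 0 (norm x)" by (auto simp: mult_left_le_one_le)
  qed (auto intro: has_derivative_at_withinI g)
  ultimately show ?thesis by (simp add: power2_eq_square mult_ac)
qed

lemma fhat_has_derivative_0:
  fixes f :: "real^'n \<Rightarrow> real^'m \<Rightarrow> 'q \<Rightarrow> real^'n"
  assumes "((\<lambda>z. f (fst z) (snd z) i) has_derivative (\<lambda>z. A *v fst z + B *v snd z)) (at (0, 0))"
  shows "(fhat f K i has_derivative (\<lambda>h. (A + B ** K i) *v h)) (at 0)"
proof -
  have inner: "((\<lambda>x. (x, K i *v x)) has_derivative (\<lambda>h. (h, K i *v h))) (at (0::real^'n))"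
    by (intro derivative_intros) (auto intro: bounded_linear.has_derivative)
  have "((\<lambda>x. f (fst (x, K i *v x)) (snd (x, K i *v x)) i) has_derivative
        (\<lambda>h. A *v fst (h, K i *v h) + B *v snd (h, K i *v h))) (at 0)"
    using has_derivative_compose[OF inner, of "\<lambda>z. f (fst z) (snd z) i" "\<lambda>z. A *v fst z + B *v snd z"]
      assms by simp
  then show ?thesis
    unfolding fhat_def by (simp add: matrix_vector_mult_add_rdistrib matrix_vector_mul_assoc)
qed

lemma fhat_linearization_bounds:
  fixes f :: "real^'n \<Rightarrow> real^'m \<Rightarrow> 'q \<Rightarrow> real^'n"
  assumes "((\<lambda>z. f (fst z) (snd z) i) has_derivative (\<lambda>z. A *v fst z + B *v snd z)) (at (0, 0))"
    and "smooth_map \<beta> (fhat f K i)" and "f 0 0 i = 0" and "norm x \<le> 1"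
  shows "norm (fhat f K i x - (A + B ** K i) *v x) \<le> \<bar>\<beta>\<bar> * (norm x)\<^sup>2"
    and "norm (fhat f K i x + (A + B ** K i) *v x) \<le> (\<bar>\<beta>\<bar> + 2 * onorm ((*v) (A + B ** K i))) * norm x"
proof -
  let ?G = "A + B ** K i"
  show diff: "norm (fhat f K i x - ?G *v x) \<le> \<bar>\<beta>\<bar> * (norm x)\<^sup>2"
    using smooth_map_linearization_error[OF assms(2) fhat_has_derivative_0[of f i A B K, OF assms(1)], of x]
      assms(3) by (simp add: fhat_def)
  have "fhat f K i x + ?G *v x = (fhat f K i x - ?G *v x) + 2 *\<^sub>R (?G *v x)"
    by (simp add: algebra_simps scaleR_2)
  then have "norm (fhat f K i x + ?G *v x) \<le> norm (fhat f K i x - ?G *v x) + 2 * norm (?G *v x)"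
    by (metis norm_scaleR norm_triangle_ineq abs_numeral)
  also have "\<dots> \<le> \<bar>\<beta>\<bar> * norm x + 2 * (onorm ((*v) ?G) * norm x)"
  proof (intro add_mono mult_left_mono)
    have "\<bar>\<beta>\<bar> * (norm x)\<^sup>2 \<le> \<bar>\<beta>\<bar> * norm x"
      using assms(4) by (intro mult_left_mono) (auto simp: power2_eq_square mult_left_le_one_le)
    with diff show "norm (fhat f K i x - ?G *v x) \<le> \<bar>\<beta>\<bar> * norm x" by linarith
    show "norm (?G *v x) \<le> onorm ((*v) ?G) * norm x"
      by (rule onorm[OF matrix_vector_mul_bounded_linear])
  qed simp
  finally show "norm (fhat f K i x + ?G *v x) \<le> (\<bar>\<beta>\<bar> + 2 * onorm ((*v) ?G)) * norm x"
    by (simp add: algebra_simps)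
qed

context
  fixes P :: "'q::finite \<Rightarrow> 'q \<Rightarrow> real" and G :: "'q \<Rightarrow> real^'n^'n"
  assumes sto: "stochastic P" and stable: "MJLS_ms_stable P G"
begin

lemma Vf_Bellman:
  "(\<Sum>j\<in>UNIV. P i j * Vf P G l K \<beta>l \<alpha> (G i *v v) j) = Vf P G l K \<beta>l \<alpha> v i - lq l K \<beta>l \<alpha> v i"
proof -
  obtain C r where "0 \<le> C" "0 < r" "r < 1" "\<And>k i v. second_moment P G k i v \<le> C * r ^ k * (norm v)\<^sup>2"
    using MJLS_ms_stable_exponential[OF sto stable] by blast
  from quad_cost_series_Bellman[OF sto this] show ?thesis
    by (simp add: Vf_eq_quad_cost_series lq_eq_quad_cost)
qed

lemma Vf_drift_le:
  assumes "\<And>j. \<bar>Vf P G l K \<beta>l \<alpha> y j - Vf P G l K \<beta>l \<alpha> (G i *v x) j\<bar> \<le> E"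
  shows "(\<Sum>j\<in>UNIV. P i j * Vf P G l K \<beta>l \<alpha> y j) - Vf P G l K \<beta>l \<alpha> x i \<le> E - lq l K \<beta>l \<alpha> x i"
proof -
  have "(\<Sum>j\<in>UNIV. P i j * (Vf P G l K \<beta>l \<alpha> y j - Vf P G l K \<beta>l \<alpha> (G i *v x) j)) \<le> (\<Sum>j\<in>UNIV. P i j * E)"
    using sto assms unfolding stochastic_def by (intro sum_mono mult_left_mono) (auto simp: abs_le_iff)
  then show ?thesis
    using Vf_Bellman[of i l K \<beta>l \<alpha> x] sto
    by (simp add: right_diff_distrib sum_subtractf stochastic_def flip: sum_distrib_right)
qed

lemma Vf_diff_le:
  obtains K1 K2 where "0 \<le> K1" "0 \<le> K2"
    "\<And>\<alpha> y y' j. \<bar>Vf P G l K \<beta>l \<alpha> y j - Vf P G l K \<beta>l \<alpha> y' j\<bar>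
        \<le> (\<Sum>t\<in>UNIV. \<bar>(\<alpha> + \<beta>l t) / 2\<bar>) * K1 * (norm (y - y') * norm (y + y')) + K2 * norm (y - y')"
proof -
  obtain C r where Cr: "0 \<le> C" "0 < r" "r < 1"
    and exp_stable: "\<And>k i v. second_moment P G k i v \<le> C * r ^ k * (norm v)\<^sup>2"
    using MJLS_ms_stable_exponential[OF sto stable] by blast
  let ?K2 = "(\<Sum>t\<in>UNIV. norm (grad0 (\<lambda>y. lbar l K y t))) * (sqrt C / (1 - sqrt r))"
  show thesis
  proof (rule that[of "C / (1 - r)" ?K2])
    show "0 \<le> C / (1 - r)" "0 \<le> ?K2"
      using Cr by (auto intro!: mult_nonneg_nonneg sum_nonneg divide_nonneg_pos)
    fix \<alpha> y y' j
    show "\<bar>Vf P G l K \<beta>l \<alpha> y j - Vf P G l K \<beta>l \<alpha> y' j\<bar>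
        \<le> (\<Sum>t\<in>UNIV. \<bar>(\<alpha> + \<beta>l t) / 2\<bar>) * (C / (1 - r)) * (norm (y - y') * norm (y + y'))
          + ?K2 * norm (y - y')"
      using quad_cost_series_diff_le[OF sto Cr exp_stable, of "\<lambda>\<theta>. (\<alpha> + \<beta>l \<theta>) / 2"
          "\<lambda>\<theta>. grad0 (\<lambda>y. lbar l K y \<theta>)" y j y']
      by (simp add: Vf_eq_quad_cost_series mult_ac)
  qed
qed

lemma Vf_bounded_below_on_ball:
  obtains b where "\<And>y j. norm y < R \<Longrightarrow> b \<le> Vf P G l K \<beta>l \<alpha> y j"
proof -
  obtain K1 K2 where K: "0 \<le> K1" "0 \<le> K2"
    and diff: "\<And>y y' j. \<bar>Vf P G l K \<beta>l \<alpha> y j - Vf P G l K \<beta>l \<alpha> y' j\<bar>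
        \<le> (\<Sum>t\<in>UNIV. \<bar>(\<alpha> + \<beta>l t) / 2\<bar>) * K1 * (norm (y - y') * norm (y + y')) + K2 * norm (y - y')"
    using Vf_diff_le by metis
  define S where "S = (\<Sum>t\<in>UNIV. \<bar>(\<alpha> + \<beta>l t) / 2\<bar>)"
  have S: "0 \<le> S" unfolding S_def by (auto intro: sum_nonneg)
  have "Vf P G l K \<beta>l \<alpha> 0 j = 0" for j
    by (simp add: Vf_eq_quad_cost_series quad_cost_series_def)
  then have "\<bar>Vf P G l K \<beta>l \<alpha> y j\<bar> \<le> S * K1 * (norm y * norm y) + K2 * norm y" for y j
    using diff[of y j 0] by (simp add: S_def)
  moreover have "S * K1 * (norm y * norm y) + K2 * norm y \<le> S * K1 * (R * R) + K2 * R"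
    if "norm y < R" for y :: "real^'n"
    using that S K le_less_trans[OF norm_ge_zero that] by (intro add_mono mult_left_mono mult_mono) auto
  ultimately show thesis
    by (intro that[of "- (S * K1 * (R * R) + K2 * R)"]) (smt (verit))
qed

end

lemma terminal_cost_decrease:
  fixes P :: "'q::finite \<Rightarrow> 'q \<Rightarrow> real"
    and f :: "real^'n \<Rightarrow> real^'m \<Rightarrow> 'q \<Rightarrow> real^'n"
    and A :: "'q \<Rightarrow> real^'n^'n" and B :: "'q \<Rightarrow> real^'m^'n"
  assumes sto: "stochastic P"
    and f0: "\<And>i. f 0 0 i = 0"
    and AB: "\<And>i. ((\<lambda>z. f (fst z) (snd z) i) has_derivative
                  (\<lambda>z. A i *v fst z + B i *v snd z)) (at (0, 0))"
    and K_mss: "MJLS_ms_stable P (\<lambda>i. A i + B i ** K i)"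
    and fhat_smooth: "\<And>i. smooth_map (\<beta>f i) (fhat f K i)"
    and lbar_smooth: "\<And>i. smooth_scalar (\<beta>l i) (\<lambda>x. lbar l K x i)"
  obtains \<delta> \<alpha> where "0 < \<delta>" "0 < \<alpha>"
    "\<And>x i. norm x < \<delta> \<Longrightarrow>
        (\<Sum>j\<in>UNIV. P i j * Vf P (\<lambda>i. A i + B i ** K i) l K \<beta>l \<alpha> (fhat f K i x) j)
          - Vf P (\<lambda>i. A i + B i ** K i) l K \<beta>l \<alpha> x i \<le> - lbar l K x i"
proof -
  define G where "G = (\<lambda>i. A i + B i ** K i)"
  obtain K1 K2 where K: "0 \<le> K1" "0 \<le> K2"
    and diff: "\<And>\<alpha> y y' j. \<bar>Vf P G l K \<beta>l \<alpha> y j - Vf P G l K \<beta>l \<alpha> y' j\<bar>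
        \<le> (\<Sum>t\<in>UNIV. \<bar>(\<alpha> + \<beta>l t) / 2\<bar>) * K1 * (norm (y - y') * norm (y + y')) + K2 * norm (y - y')"
    using Vf_diff_le[OF sto K_mss[folded G_def]] by metis
  define Bl where "Bl = (\<Sum>\<theta>\<in>UNIV. \<bar>\<beta>l \<theta>\<bar>)"
  define Bf where "Bf = (\<Sum>\<theta>\<in>UNIV. \<bar>\<beta>f \<theta>\<bar>)"
  define NG where "NG = (\<Sum>\<theta>\<in>UNIV. onorm ((*v) (G \<theta>)))"
  have Bl: "\<bar>\<beta>l i\<bar> \<le> Bl" "0 \<le> Bl" and Bf: "\<bar>\<beta>f i\<bar> \<le> Bf" "0 \<le> Bf" for i
    unfolding Bl_def Bf_def by (auto intro: member_le_sum sum_nonneg)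
  have NG: "onorm ((*v) (G i)) \<le> NG" "0 \<le> NG" for i
    unfolding NG_def by (auto intro!: member_le_sum sum_nonneg onorm_pos_le)
  \<comment> \<open>chosen so that \<open>(\<alpha> + \<beta>l i) / 2 \<ge> 1 + K2 * Bf + \<bar>\<beta>l i\<bar>\<close>; then \<open>\<delta>\<close> makes the cubic
     term at most \<open>|x|\<^sup>2\<close>\<close>
  define \<alpha> where "\<alpha> = 3 * Bl + 2 * K2 * Bf + 2"
  define S where "S = (\<Sum>t\<in>UNIV. \<bar>(\<alpha> + \<beta>l t) / 2\<bar>)"
  define M where "M = S * K1 * Bf * (Bf + 2 * NG)"
  have S: "0 \<le> S"
    unfolding S_def by (intro sum_nonneg) simp
  have M: "0 \<le> M"
    unfolding M_def using S K Bf NG by simp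
  define \<delta> where "\<delta> = 1 / (M + 1)"
  show thesis
  proof (rule that[of \<delta> \<alpha>], fold G_def)
    show "0 < \<delta>" using M by (simp add: \<delta>_def)
    show "0 < \<alpha>" using Bl mult_nonneg_nonneg[OF K(2) Bf(2)] by (simp add: \<alpha>_def)
    fix x :: "real^'n" and i assume x: "norm x < \<delta>"
    let ?V = "Vf P G l K \<beta>l \<alpha>"
    define y where "y = fhat f K i x"
    define nx where "nx = norm x"
    have "nx + M * nx < 1"
      using x M by (simp add: nx_def \<delta>_def field_simps)
    then have nx: "0 \<le> nx" "nx \<le> 1" "M * nx \<le> 1"
      using mult_nonneg_nonneg[OF M norm_ge_zero[of x]] norm_ge_zero[of x] unfolding nx_def by linarith+
    note lin = fhat_linearization_bounds[of f i "A i" "B i" "\<beta>f i" K x, OF AB fhat_smooth f0]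
    have y_diff: "norm (y - G i *v x) \<le> Bf * nx\<^sup>2"
      using lin(1) nx(2) mult_right_mono[OF Bf(1)[of i] zero_le_power2[of nx]]
      by (simp add: y_def nx_def G_def)
    have "\<bar>\<beta>f i\<bar> + 2 * onorm ((*v) (G i)) \<le> Bf + 2 * NG"
      using Bf(1)[of i] NG(1)[of i] by simp
    then have y_sum: "norm (y + G i *v x) \<le> (Bf + 2 * NG) * nx"
      using lin(2) nx(1,2) mult_right_mono[of _ _ nx] by (fastforce simp: y_def nx_def G_def)
    have "S * K1 * (norm (y - G i *v x) * norm (y + G i *v x)) \<le> S * K1 * (Bf * nx\<^sup>2 * ((Bf + 2 * NG) * nx))"
      using S K Bf(2) y_diff y_sum by (intro mult_left_mono mult_mono) auto
    also have "\<dots> = (M * nx) * nx\<^sup>2" by (simp add: M_def power2_eq_square algebra_simps)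
    also have "\<dots> \<le> nx\<^sup>2" using mult_right_mono[OF nx(3) zero_le_power2[of nx]] by simp
    finally have "\<bar>?V y j - ?V (G i *v x) j\<bar> \<le> nx\<^sup>2 + K2 * Bf * nx\<^sup>2" for j
      using diff[where \<alpha>=\<alpha> and y=y and y'="G i *v x" and j=j] mult_left_mono[OF y_diff K(2)]
      by (simp add: S_def mult_ac)
    then have "(\<Sum>j\<in>UNIV. P i j * ?V y j) - ?V x i \<le> nx\<^sup>2 + K2 * Bf * nx\<^sup>2 - lq l K \<beta>l \<alpha> x i"
      by (rule Vf_drift_le[OF sto K_mss[folded G_def]])
    moreover have "lbar l K x i \<le> grad0 (\<lambda>y. lbar l K y i) \<bullet> x + \<bar>\<beta>l i\<bar> * nx\<^sup>2"
      using smooth_scalar_linearization_error[OF lbar_smooth[of i], of x] by (simp add: lbar_def nx_def)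
    moreover have "\<bar>\<beta>l i\<bar> * nx\<^sup>2 \<le> (3 / 2 * Bl + \<beta>l i / 2) * nx\<^sup>2"
      using Bl(1)[of i] by (intro mult_right_mono) (auto simp: abs_le_iff)
    moreover have "(\<alpha> + \<beta>l i) / 2 * nx\<^sup>2 = nx\<^sup>2 + K2 * Bf * nx\<^sup>2 + (3 / 2 * Bl + \<beta>l i / 2) * nx\<^sup>2"
      by (simp add: \<alpha>_def algebra_simps)
    ultimately show "(\<Sum>j\<in>UNIV. P i j * ?V (fhat f K i x) j) - ?V x i \<le> - lbar l K x i"
      unfolding y_def lq_def nx_def[symmetric] by linarith
  qed
qed

section \<open>Mean-square stability from a stochastic Lyapunov drift\<close>

lemma lsc_bounded_below_on_compact:
  fixes F :: "'a::topological_space \<Rightarrow> real"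
  assumes "lsc F" and "compact S"
  obtains b where "\<And>x. x \<in> S \<Longrightarrow> b \<le> F x"
proof -
  have "\<exists>U. open U \<and> x \<in> U \<and> (\<forall>y\<in>U. F x - 1 < F y)" for x
    using assms(1) unfolding lsc_def eventually_nhds by (metis less_add_one diff_less_eq)
  then obtain U where U: "\<And>x. open (U x)" "\<And>x. x \<in> U x" "\<And>x y. y \<in> U x \<Longrightarrow> F x - 1 < F y"
    by metis
  obtain T where T: "finite T" "S \<subseteq> (\<Union>c\<in>T. U c)"
    by (rule compactE_image[OF assms(2), of S U]) (use U in auto)
  show thesis
  proof (rule that)
    fix y assume "y \<in> S"
    then obtain t where t: "t \<in> T" "y \<in> U t" using T by auto
    have "- (\<Sum>s\<in>T. \<bar>F s\<bar>) - 1 \<le> - \<bar>F t\<bar> - 1"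
      using member_le_sum[of t T "\<lambda>s. \<bar>F s\<bar>"] t T by auto
    also have "\<dots> \<le> F y" using U(3)[OF t(2)] by linarith
    finally show "- (\<Sum>s\<in>T. \<bar>F s\<bar>) - 1 \<le> F y" .
  qed
qed

lemma cl_state_snoc:
  "cl_state f kap x i (ms @ [j])
     = f (cl_state f kap x i ms) (kap (cl_state f kap x i ms) (last (i # ms))) (last (i # ms))"
  by (induction ms arbitrary: x i) auto

lemma cl_state_invariant:
  fixes P :: "'q::finite \<Rightarrow> 'q \<Rightarrow> real"
  assumes sto: "stochastic P" and F0: "F x0 i0"
    and invariant: "\<And>x i j. F x i \<Longrightarrow> 0 < P i j \<Longrightarrow> F (f x (kap x i) i) j"
    and "0 < pprob P i0 ms"
  shows "F (cl_state f kap x0 i0 ms) (last (i0 # ms))"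
  using assms(4)
proof (induction ms rule: rev_induct)
  case Nil
  then show ?case using F0 by simp
next
  case (snoc j ms)
  note pos = pprob_snoc_pos[OF sto snoc.prems]
  from invariant[OF snoc.IH[OF pos(1)] pos(2)] show ?case
    by (simp add: cl_state_snoc)
qed

text \<open>Telescoping the drift bounds \<open>\<gamma> \<Sum>\<^sub>k\<^sub><\<^sub>n E|x\<^sub>k|\<^sup>2\<close> by \<open>W(x\<^sub>0) - b\<close>.\<close>

lemma cl_ms_stable_of_drift:
  fixes P :: "'q::finite \<Rightarrow> 'q \<Rightarrow> real" and f :: "real^'n \<Rightarrow> real^'m \<Rightarrow> 'q \<Rightarrow> real^'n"
  assumes sto: "stochastic P" and \<gamma>: "0 < \<gamma>" and F0: "F x0 i0"
    and invariant: "\<And>x i j. F x i \<Longrightarrow> 0 < P i j \<Longrightarrow> F (f x (kap x i) i) j"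
    and drift: "\<And>x i. F x i \<Longrightarrow> (\<Sum>j\<in>UNIV. P i j * W (f x (kap x i) i) j) \<le> W x i - \<gamma> * (norm x)\<^sup>2"
    and bounded_below: "\<And>x i. F x i \<Longrightarrow> b \<le> W x i"
  shows "(\<lambda>k. Ehist P i0 k (\<lambda>h. (norm (cl_state f kap x0 i0 (tl h)))\<^sup>2)) \<longlonglongrightarrow> 0"
proof -
  define Z where "Z = cl_state f kap x0 i0"
  note F_Z = cl_state_invariant[where F=F and f=f and kap=kap, OF sto F0 invariant, folded Z_def]
  define a where "a k = Ehist P i0 k (\<lambda>h. W (Z (tl h)) (last h))" for k
  define e where "e k = Ehist P i0 k (\<lambda>h. (norm (Z (tl h)))\<^sup>2)" for k
  have e_nonneg: "0 \<le> e k" for k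
    unfolding e_def by (rule Ehist_nonneg[OF sto]) simp
  have a_bounded: "b \<le> a k" for k
    using Ehist_mono_AE[OF sto, of k i0 "\<lambda>h. b" "\<lambda>h. W (Z (tl h)) (last h)"] F_Z bounded_below
    by (simp add: a_def Ehist_const[OF sto])
  have a_step: "a (Suc k) \<le> a k - \<gamma> * e k" for k
  proof -
    have "a (Suc k) = Ehist P i0 k (\<lambda>h. \<Sum>j\<in>UNIV. P (last h) j * W (Z (tl (h @ [j]))) j)"
      unfolding a_def Ehist_snoc by simp
    also have "\<dots> \<le> Ehist P i0 k (\<lambda>h. W (Z (tl h)) (last h) - \<gamma> * (norm (Z (tl h)))\<^sup>2)"
      by (rule Ehist_mono_AE[OF sto])
         (use drift[OF F_Z] in \<open>simp add: Z_def cl_state_snoc del: last.simps\<close>)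
    also have "\<dots> = a k - \<gamma> * e k"
      unfolding a_def e_def by (simp add: Ehist_diff Ehist_cmult)
    finally show ?thesis .
  qed
  have telescope: "\<gamma> * (\<Sum>k<n. e k) \<le> a 0 - a n" for n
  proof (induction n)
    case (Suc n)
    then show ?case using a_step[of n] by (simp add: distrib_left)
  qed simp
  have "(\<Sum>k<n. e k) \<le> (a 0 - b) / \<gamma>" for n
    using telescope[of n] a_bounded[of n] \<gamma> by (simp add: field_simps)
  then have "summable e"
    by (intro summableI_nonneg_bounded[OF e_nonneg])
  then show ?thesis
    unfolding e_def[symmetric] Z_def[symmetric] by (rule summable_LIMSEQ_zero)
qed

section \<open>Recursive feasibility and value decrease of the EMPC\<close>

lemma pol_state_snoc:
  "pol_state f pol x i (ms @ [j]) = f (pol_state f pol x i ms) (pol (i # ms)) (last (i # ms))"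
  by (induction ms arbitrary: pol x i) auto

lemma pol_state_cong:
  "(\<And>h. length h \<le> length ms \<Longrightarrow> pol h = pol' h) \<Longrightarrow> pol_state f pol x i ms = pol_state f pol' x i ms"
proof (induction ms arbitrary: pol pol' x i)
  case Nil
  then show ?case by simp
next
  case (Cons j js)
  have "pol_state f (\<lambda>h. pol (i # h)) y j js = pol_state f (\<lambda>h. pol' (i # h)) y j js" for y
    by (rule Cons.IH) (use Cons.prems in auto)
  moreover have "pol [i] = pol' [i]" using Cons.prems by simp
  ultimately show ?case by simp
qed

text \<open>The candidate policy for the successor state: the tail of \<open>pol\<close>, followed at the
  last stage by the terminal law \<open>K\<close>. Its histories start at \<open>\<theta>\<^sub>1\<close>, so \<open>pol (i # h)\<close>
  is the input \<open>pol\<close> applies after the same mode history.\<close>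

definition shifted_pol :: "(real^'n \<Rightarrow> real^'m \<Rightarrow> 'q \<Rightarrow> real^'n) \<Rightarrow> ('q \<Rightarrow> real^'n^'m) \<Rightarrow> nat
    \<Rightarrow> ('q list \<Rightarrow> real^'m) \<Rightarrow> real^'n \<Rightarrow> 'q \<Rightarrow> 'q list \<Rightarrow> real^'m" where
  "shifted_pol f K N pol x i h =
     (if length h < N then pol (i # h) else K (last h) *v pol_state f pol x i h)"

lemma pol_state_shifted_pol:
  "length ms < N \<Longrightarrow>
     pol_state f (shifted_pol f K N pol x i) (f x (pol [i]) i) j ms = pol_state f pol x i (j # ms)"
  by (simp add: pol_state_cong[of ms "shifted_pol f K N pol x i" "\<lambda>h. pol (i # h)"] shifted_pol_def)

lemma pol_state_shifted_pol_last:
  assumes "length ms = N - 1" and "1 \<le> N"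
  shows "pol_state f (shifted_pol f K N pol x i) (f x (pol [i]) i) j (ms @ [j'])
           = fhat f K (last (j # ms)) (pol_state f pol x i (j # ms))"
  using assms by (simp add: pol_state_snoc pol_state_shifted_pol fhat_def shifted_pol_def)

lemma feasible_shifted_pol:
  fixes P :: "'q::finite \<Rightarrow> 'q \<Rightarrow> real"
  assumes sto: "stochastic P" and N: "1 \<le> N" and upi: "UPI P f Y K Xf"
    and feas: "feasible_pol P f Y Xf N x i pol" and pij: "0 < P i j"
  shows "feasible_pol P f Y Xf N (f x (pol [i]) i) j (shifted_pol f K N pol x i)"
proof -
  let ?ps = "shifted_pol f K N pol x i"
  have feas_Y: "\<And>k ms. k < N \<Longrightarrow> ms \<in> paths k \<Longrightarrow> 0 < pprob P i ms \<Longrightarrow>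
        (pol_state f pol x i ms, pol (i # ms)) \<in> Y (last (i # ms))"
   and feas_Xf: "\<And>ms. ms \<in> paths N \<Longrightarrow> 0 < pprob P i ms \<Longrightarrow> pol_state f pol x i ms \<in> Xf (last (i # ms))"
    using feas unfolding feasible_pol_def by auto
  show ?thesis
    unfolding feasible_pol_def
  proof (intro conjI ballI allI impI)
    fix k ms assume k: "k < N" and ms: "ms \<in> paths k" and pp: "0 < pprob P j ms"
    have pp': "0 < pprob P i (j # ms)" and lms: "length ms = k"
      using pij pp ms by (simp_all add: paths_def)
    have state: "pol_state f ?ps (f x (pol [i]) i) j ms = pol_state f pol x i (j # ms)"
      using pol_state_shifted_pol[of ms N f K pol x i j] lms k by simp
    show "(pol_state f ?ps (f x (pol [i]) i) j ms, ?ps (j # ms)) \<in> Y (last (j # ms))"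
    proof (cases "Suc k < N")
      case True
      then show ?thesis
        using feas_Y[OF True _ pp'] lms state by (simp add: paths_def shifted_pol_def)
    next
      case False
      then have "pol_state f pol x i (j # ms) \<in> Xf (last (j # ms))"
        using feas_Xf[OF _ pp'] lms k by (simp add: paths_def)
      then show ?thesis
        using upi False k lms state by (simp add: UPI_def shifted_pol_def)
    qed
  next
    fix ms assume ms: "ms \<in> paths N" and pp: "0 < pprob P j ms"
    then obtain ms0 j' where ms0: "ms = ms0 @ [j']" "length ms0 = N - 1"
      using N by (cases ms rule: rev_cases) (auto simp: paths_def)
    have pp0: "0 < pprob P j ms0" "0 < P (last (j # ms0)) j'"
      using pprob_snoc_pos[OF sto] pp ms0(1) by blast+
    have "pol_state f pol x i (j # ms0) \<in> Xf (last (i # j # ms0))"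
      by (rule feas_Xf) (use ms0 N pij pp0 in \<open>auto simp: paths_def\<close>)
    then have "fhat f K (last (j # ms0)) (pol_state f pol x i (j # ms0)) \<in> Xf j'"
      using upi pp0(2) by (simp add: UPI_def fhat_def)
    then show "pol_state f ?ps (f x (pol [i]) i) j ms \<in> Xf (last (j # ms))"
      using pol_state_shifted_pol_last[OF ms0(2) N, of f K pol x i j j'] ms0(1) by simp
  qed
qed

lemma cost_shifted_pol:
  fixes P :: "'q::finite \<Rightarrow> 'q \<Rightarrow> real" and f :: "real^'n \<Rightarrow> real^'m \<Rightarrow> 'q \<Rightarrow> real^'n"
    and pol :: "'q list \<Rightarrow> real^'m" and x :: "real^'n" and i :: 'q
  assumes N: "N = Suc M"
  defines "X \<equiv> pol_state f pol x i"
  shows "cost_pol P f l V N (f x (pol [i]) i) j (shifted_pol f K N pol x i)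
           = Ehist P j M (\<lambda>h. \<Sum>j'\<in>UNIV. P (last (i # h)) j' * V (fhat f K (last (i # h)) (X h)) j')
             + (\<Sum>k<M. Ehist P j k (\<lambda>h. l (X h) (pol (i # h)) (last (i # h))))
             + Ehist P j M (\<lambda>h. l (X h) (K (last (i # h)) *v X h) (last (i # h)))"
proof -
  let ?ps = "shifted_pol f K N pol x i"
  let ?Z = "pol_state f ?ps (f x (pol [i]) i) j"
  have state: "?Z ms = X (j # ms)" if "length ms < N" for ms
    unfolding X_def using pol_state_shifted_pol[OF that] .
  have terminal: "Ehist P j N (\<lambda>h. V (?Z (tl h)) (last h))
      = Ehist P j M (\<lambda>h. \<Sum>j'\<in>UNIV. P (last (i # h)) j' * V (fhat f K (last (i # h)) (X h)) j')"
    unfolding Ehist_snoc[of P j M, folded N]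
  proof (rule Ehist_cong)
    fix ms :: "'q list" assume "ms \<in> paths M"
    then have "length ms = N - 1" using N by (simp add: paths_def)
    from pol_state_shifted_pol_last[OF this, of f K pol x i j] N
    show "(\<Sum>j'\<in>UNIV. P (last (j # ms)) j' * V (?Z (tl ((j # ms) @ [j']))) (last ((j # ms) @ [j'])))
       = (\<Sum>j'\<in>UNIV. P (last (i # j # ms)) j' * V (fhat f K (last (i # j # ms)) (X (j # ms))) j')"
      unfolding X_def by simp
  qed
  have running: "Ehist P j k (\<lambda>h. l (?Z (tl h)) (?ps h) (last h))
                   = Ehist P j k (\<lambda>h. l (X h) (pol (i # h)) (last (i # h)))" if "k < M" for k
  proof (rule Ehist_cong)
    fix ms :: "'q list" assume "ms \<in> paths k"
    then have "length ms = k" by (simp add: paths_def)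
    with that N show "l (?Z (tl (j # ms))) (?ps (j # ms)) (last (j # ms))
                        = l (X (j # ms)) (pol (i # j # ms)) (last (i # j # ms))"
      using state[of ms] by (simp add: shifted_pol_def)
  qed
  have last_stage: "Ehist P j M (\<lambda>h. l (?Z (tl h)) (?ps h) (last h))
                      = Ehist P j M (\<lambda>h. l (X h) (K (last (i # h)) *v X h) (last (i # h)))"
  proof (rule Ehist_cong)
    fix ms :: "'q list" assume "ms \<in> paths M"
    then have "length ms = M" by (simp add: paths_def)
    with N show "l (?Z (tl (j # ms))) (?ps (j # ms)) (last (j # ms))
                   = l (X (j # ms)) (K (last (i # j # ms)) *v X (j # ms)) (last (i # j # ms))"
      using state[of ms] by (simp add: shifted_pol_def X_def)
  qed
  have split_last: "(\<Sum>k<N. g k) = (\<Sum>k<M. g k) + g M" for g :: "nat \<Rightarrow> real"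
    by (simp add: N)
  have "(\<Sum>k<M. Ehist P j k (\<lambda>h. l (?Z (tl h)) (?ps h) (last h)))
          = (\<Sum>k<M. Ehist P j k (\<lambda>h. l (X h) (pol (i # h)) (last (i # h))))"
    by (intro sum.cong refl running) simp
  then show ?thesis
    unfolding cost_pol_def terminal split_last last_stage by (simp only: add.assoc)
qed

lemma expected_cost_shifted_pol:
  fixes P :: "'q::finite \<Rightarrow> 'q \<Rightarrow> real" and f :: "real^'n \<Rightarrow> real^'m \<Rightarrow> 'q \<Rightarrow> real^'n"
    and pol :: "'q list \<Rightarrow> real^'m" and x :: "real^'n" and i :: 'q
  assumes N: "1 \<le> N"
  defines "X \<equiv> pol_state f pol x i"
  shows "(\<Sum>j\<in>UNIV. P i j * cost_pol P f l V N (f x (pol [i]) i) j (shifted_pol f K N pol x i))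
           = cost_pol P f l V N x i pol - l x (pol [i]) i
             + Ehist P i N (\<lambda>h. (\<Sum>j'\<in>UNIV. P (last h) j' * V (fhat f K (last h) (X (tl h))) j')
                                + l (X (tl h)) (K (last h) *v X (tl h)) (last h) - V (X (tl h)) (last h))"
proof -
  obtain M where M: "N = Suc M" using N by (cases N) auto
  define Ft where "Ft h = (\<Sum>j'\<in>UNIV. P (last h) j' * V (fhat f K (last h) (X (tl h))) j')" for h
  define Lk where "Lk h = l (X (tl h)) (K (last h) *v X (tl h)) (last h)" for h
  define Lp where "Lp h = l (X (tl h)) (pol h) (last h)" for h
  define Vt where "Vt h = V (X (tl h)) (last h)" for h
  have "(\<Sum>j\<in>UNIV. P i j * cost_pol P f l V N (f x (pol [i]) i) j (shifted_pol f K N pol x i))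
          = Ehist P i N Ft + (\<Sum>k<M. Ehist P i (Suc k) Lp) + Ehist P i N Lk"
    unfolding cost_shifted_pol[OF M, where f=f and pol=pol and x=x and i=i, folded X_def]
    by (simp add: M Ehist_Suc Ft_def Lk_def Lp_def distrib_left sum.distrib sum_distrib_left
        sum.swap[of _ "{..<M}"])
  moreover have "cost_pol P f l V N x i pol = Ehist P i N Vt + l x (pol [i]) i + (\<Sum>k<M. Ehist P i (Suc k) Lp)"
    unfolding cost_pol_def M sum.lessThan_Suc_shift by (simp add: Vt_def[abs_def] Lp_def[abs_def] X_def)
  ultimately show ?thesis
    by (simp add: Ehist_add Ehist_diff flip: Ft_def Lk_def Vt_def)
qed


lemma expected_cost_shifted_pol_le:
  fixes P :: "'q::finite \<Rightarrow> 'q \<Rightarrow> real"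
  assumes sto: "stochastic P" and N: "1 \<le> N"
    and feas: "feasible_pol P f Y Xf N x i pol"
    and terminal_decrease: "\<And>y \<theta>. y \<in> Xf \<theta> \<Longrightarrow>
          (\<Sum>j\<in>UNIV. P \<theta> j * V (fhat f K \<theta> y) j) - V y \<theta> \<le> - lbar l K y \<theta>"
    and ls: "\<And>\<theta>. l 0 0 \<theta> = ls"
  shows "(\<Sum>j\<in>UNIV. P i j * cost_pol P f l V N (f x (pol [i]) i) j (shifted_pol f K N pol x i))
           \<le> cost_pol P f l V N x i pol - l x (pol [i]) i + ls"
proof -
  let ?X = "pol_state f pol x i"
  have "Ehist P i N (\<lambda>h. (\<Sum>j'\<in>UNIV. P (last h) j' * V (fhat f K (last h) (?X (tl h))) j')
                          + l (?X (tl h)) (K (last h) *v ?X (tl h)) (last h) - V (?X (tl h)) (last h))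
          \<le> Ehist P i N (\<lambda>h. ls)"
  proof (rule Ehist_mono_AE[OF sto])
    fix ms assume "ms \<in> paths N" "0 < pprob P i ms"
    then have "?X ms \<in> Xf (last (i # ms))"
      using feas unfolding feasible_pol_def by auto
    from terminal_decrease[OF this] show "(\<Sum>j'\<in>UNIV. P (last (i # ms)) j' * V (fhat f K (last (i # ms)) (?X (tl (i # ms)))) j')
        + l (?X (tl (i # ms))) (K (last (i # ms)) *v ?X (tl (i # ms))) (last (i # ms))
        - V (?X (tl (i # ms))) (last (i # ms)) \<le> ls"
      using ls by (simp add: lbar_def)
  qed
  then show ?thesis
    unfolding expected_cost_shifted_pol[OF N] by (simp add: Ehist_const[OF sto])
qed


context
  fixes P :: "'q::finite \<Rightarrow> 'q \<Rightarrow> real" and f :: "real^'n \<Rightarrow> real^'m \<Rightarrow> 'q \<Rightarrow> real^'n"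
    and Y :: "'q \<Rightarrow> ((real^'n) \<times> (real^'m)) set" and Xf :: "'q \<Rightarrow> (real^'n) set"
    and l :: "real^'n \<Rightarrow> real^'m \<Rightarrow> 'q \<Rightarrow> real" and V :: "real^'n \<Rightarrow> 'q \<Rightarrow> real"
    and K :: "'q \<Rightarrow> real^'n^'m" and N :: nat and kap :: "real^'n \<Rightarrow> 'q \<Rightarrow> real^'m"
    and ls :: real
  assumes sto: "stochastic P" and N: "1 \<le> N" and upi: "UPI P f Y K Xf"
    and terminal_decrease: "\<And>y \<theta>. y \<in> Xf \<theta> \<Longrightarrow>
          (\<Sum>j\<in>UNIV. P \<theta> j * V (fhat f K \<theta> y) j) - V y \<theta> \<le> - lbar l K y \<theta>"
    and ls: "\<And>\<theta>. l 0 0 \<theta> = ls"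
    and EMPC: "EMPC_law P f Y Xf l V N kap"
begin

definition empc_feasible :: "real^'n \<Rightarrow> 'q \<Rightarrow> bool" where
  "empc_feasible x i \<longleftrightarrow> (\<exists>pol. feasible_pol P f Y Xf N x i pol)"

definition empc_pol :: "real^'n \<Rightarrow> 'q \<Rightarrow> 'q list \<Rightarrow> real^'m" where
  "empc_pol x i = (SOME pol. optimal_pol P f Y Xf l V N x i pol \<and> kap x i = pol [i])"

definition empc_value :: "real^'n \<Rightarrow> 'q \<Rightarrow> real" where
  "empc_value x i = cost_pol P f l V N x i (empc_pol x i)"

lemma empc_pol_optimal:
  assumes "empc_feasible x i"
  shows "optimal_pol P f Y Xf l V N x i (empc_pol x i)" and "kap x i = empc_pol x i [i]"
proof -
  have "\<exists>pol. optimal_pol P f Y Xf l V N x i pol \<and> kap x i = pol [i]"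
    using EMPC assms unfolding EMPC_law_def empc_feasible_def by blast
  then show "optimal_pol P f Y Xf l V N x i (empc_pol x i)" "kap x i = empc_pol x i [i]"
    unfolding empc_pol_def by (metis (mono_tags, lifting) someI_ex)+
qed

lemma empc_recursively_feasible:
  assumes "empc_feasible x i" and "0 < P i j"
  shows "empc_feasible (f x (kap x i) i) j"
  using feasible_shifted_pol[OF sto N upi _ assms(2)] empc_pol_optimal[OF assms(1)]
  unfolding empc_feasible_def optimal_pol_def by metis

lemma empc_value_decrease:
  assumes x: "empc_feasible x i"
  shows "(\<Sum>j\<in>UNIV. P i j * empc_value (f x (kap x i) i) j) \<le> empc_value x i - l x (kap x i) i + ls"
proof -
  let ?pol = "empc_pol x i"
  let ?ps = "shifted_pol f K N ?pol x i"
  have feas: "feasible_pol P f Y Xf N x i ?pol" and first: "kap x i = ?pol [i]"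
    using empc_pol_optimal[OF x] unfolding optimal_pol_def by auto
  have "P i j * empc_value (f x (kap x i) i) j \<le> P i j * cost_pol P f l V N (f x (kap x i) i) j ?ps" for j
  proof (cases "0 < P i j")
    case True
    have "feasible_pol P f Y Xf N (f x (kap x i) i) j ?ps"
      using feasible_shifted_pol[OF sto N upi feas True] first by simp
    then have "empc_value (f x (kap x i) i) j \<le> cost_pol P f l V N (f x (kap x i) i) j ?ps"
      using empc_pol_optimal(1)[OF empc_recursively_feasible[OF x True]]
      unfolding empc_value_def optimal_pol_def by blast
    then show ?thesis using True by (simp add: mult_left_mono)
  next
    case False
    then have "P i j = 0" using sto unfolding stochastic_def by (metis order_less_le)
    then show ?thesis by simp
  qed
  then have "(\<Sum>j\<in>UNIV. P i j * empc_value (f x (kap x i) i) j)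
               \<le> (\<Sum>j\<in>UNIV. P i j * cost_pol P f l V N (f x (?pol [i]) i) j ?ps)"
    unfolding first by (rule sum_mono)
  also have "\<dots> \<le> cost_pol P f l V N x i ?pol - l x (?pol [i]) i + ls"
    by (rule expected_cost_shifted_pol_le[OF sto N feas terminal_decrease ls])
  finally show ?thesis
    unfolding empc_value_def first .
qed

lemma empc_value_bounded_below:
  assumes l_nonneg: "\<And>x u i. 0 \<le> l x u i" and V_bounded: "\<And>y \<theta>. y \<in> Xf \<theta> \<Longrightarrow> b \<le> V y \<theta>"
    and x: "empc_feasible x i"
  shows "b \<le> empc_value x i"
proof -
  let ?pol = "empc_pol x i"
  have feas: "feasible_pol P f Y Xf N x i ?pol"
    using empc_pol_optimal[OF x] unfolding optimal_pol_def by auto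
  have "Ehist P i N (\<lambda>h. b) \<le> Ehist P i N (\<lambda>h. V (pol_state f ?pol x i (tl h)) (last h))"
    by (rule Ehist_mono_AE[OF sto])
       (use feas V_bounded in \<open>auto simp: feasible_pol_def\<close>)
  moreover have "0 \<le> (\<Sum>k<N. Ehist P i k (\<lambda>h. l (pol_state f ?pol x i (tl h)) (?pol h) (last h)))"
    by (intro sum_nonneg Ehist_nonneg[OF sto] l_nonneg)
  ultimately show ?thesis
    unfolding empc_value_def cost_pol_def by (simp add: Ehist_const[OF sto])
qed

text \<open>The rotated value function \<open>empc_value + \<lambda>\<close> is a Lyapunov function: the storage
  \<open>\<lambda>\<close> converts the decrease by the economic cost \<open>l - ls\<close> into a decrease by \<open>\<rho> \<ge> \<gamma>|x|\<^sup>2\<close>.\<close>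

lemma empc_loc_ms_stable:
  assumes Y_compact: "\<And>i. compact (Y i)" and l_nonneg: "\<And>x u i. 0 \<le> l x u i"
    and V_bounded: "\<And>y \<theta>. y \<in> Xf \<theta> \<Longrightarrow> bV \<le> V y \<theta>"
    and lam_lsc: "\<And>i. lsc (\<lambda>x. lam x i)"
    and dissipative: "\<And>x u i. (\<Sum>j\<in>UNIV. P i j * lam (f x u i) j) - lam x i \<le> l x u i - ls - \<rho> x i"
    and \<gamma>: "0 < \<gamma>" and \<rho>_quadratic: "\<And>x i. \<gamma> * (norm x)\<^sup>2 \<le> \<rho> x i"
  shows "loc_ms_stable P f Y Xf N kap"
  unfolding loc_ms_stable_def
proof (intro allI impI)
  fix x0 i0 assume "\<exists>pol. feasible_pol P f Y Xf N x0 i0 pol"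
  then have F0: "empc_feasible x0 i0" unfolding empc_feasible_def .
  define W where "W x i = empc_value x i + lam x i" for x i
  have state_constraint: "x \<in> fst ` Y i" if feasible: "empc_feasible x i" for x i
  proof -
    obtain pol where "feasible_pol P f Y Xf N x i pol"
      using feasible unfolding empc_feasible_def by blast
    then have "(x, pol [i]) \<in> Y i"
      using N unfolding feasible_pol_def by (auto dest!: spec[of _ 0] simp: paths_def)
    then show ?thesis by force
  qed
  have "\<exists>b. \<forall>x\<in>fst ` Y i. b \<le> lam x i" for i
    using lsc_bounded_below_on_compact[OF lam_lsc compact_continuous_image[OF continuous_on_fst[OF continuous_on_id] Y_compact]]
    by metis
  then obtain blam where blam: "\<And>i x. x \<in> fst ` Y i \<Longrightarrow> blam i \<le> lam x i"
    by metis
  have W_bounded: "bV - (\<Sum>i\<in>UNIV. \<bar>blam i\<bar>) \<le> W x i" if "empc_feasible x i" for x i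
    using empc_value_bounded_below[OF l_nonneg V_bounded that] blam[OF state_constraint[OF that]]
      member_le_sum[of i UNIV "\<lambda>i. \<bar>blam i\<bar>"]
    unfolding W_def by fastforce
  have W_drift: "(\<Sum>j\<in>UNIV. P i j * W (f x (kap x i) i) j) \<le> W x i - \<gamma> * (norm x)\<^sup>2"
    if "empc_feasible x i" for x i
    using empc_value_decrease[OF that] dissipative[of i x "kap x i"] \<rho>_quadratic[of x i]
    unfolding W_def by (simp add: distrib_left sum.distrib)
  show "(\<lambda>k. Ehist P i0 k (\<lambda>h. (norm (cl_state f kap x0 i0 (tl h)))\<^sup>2)) \<longlonglongrightarrow> 0"
    by (rule cl_ms_stable_of_drift[where F=empc_feasible and W=W and f=f and kap=kap,
          OF sto \<gamma> F0 empc_recursively_feasible W_drift W_bounded])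
qed

end


theorem theorem6:
  fixes P :: "'q::finite \<Rightarrow> 'q \<Rightarrow> real"
    and f :: "real^'n \<Rightarrow> real^'m \<Rightarrow> 'q \<Rightarrow> real^'n"
    and Y :: "'q \<Rightarrow> ((real^'n) \<times> (real^'m)) set"
    and l :: "real^'n \<Rightarrow> real^'m \<Rightarrow> 'q \<Rightarrow> real"
    and ls :: real
    and A :: "'q \<Rightarrow> real^'n^'n" and B :: "'q \<Rightarrow> real^'m^'n"
    and K :: "'q \<Rightarrow> real^'n^'m"
    and \<beta>f \<beta>l :: "'q \<Rightarrow> real"
    and N :: nat
  assumes chain: "stochastic P" "irreducible_chain P" "aperiodic_chain P"
    and Y: "\<And>i. Y i \<noteq> {}" "\<And>i. compact (Y i)"
    and l_nonneg: "\<And>x u i. 0 \<le> l x u i"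
    and l_lsc: "\<And>i. lsc (\<lambda>z. l (fst z) (snd z) i)"
    and l_lb: "\<And>i. level_bounded_loc_unif (\<lambda>x u. l x u i)"
    and f_cont: "\<And>i. continuous_on UNIV (\<lambda>z. f (fst z) (snd z) i)"
    and steady: "\<And>i. (0, 0) \<in> Y i" "\<And>i. f 0 0 i = 0" "\<And>i. l 0 0 i = ls"
      "\<And>i x u. (x, u) \<in> Y i \<Longrightarrow> f x u i = x \<Longrightarrow> ls \<le> l x u i"
    and AB: "\<And>i. ((\<lambda>z. f (fst z) (snd z) i) has_derivative
                  (\<lambda>z. A i *v fst z + B i *v snd z)) (at (0, 0))"
    and K_mss: "MJLS_ms_stable P (\<lambda>i. A i + B i ** K i)"
    and fhat_smooth: "\<And>i. smooth_map (\<beta>f i) (fhat f K i)"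
    and lbar_smooth: "\<And>i. smooth_scalar (\<beta>l i) (\<lambda>x. lbar l K x i)"
    and stabilizable: "ms_stabilizable P A B"
    and N: "N \<ge> 1"
  shows "\<exists>\<delta>>0. \<exists>\<alpha>>0.
    (\<forall>x\<in>ball 0 \<delta>. \<forall>i.
        (\<Sum>j\<in>UNIV. P i j * Vf P (\<lambda>i. A i + B i ** K i) l K \<beta>l \<alpha> (fhat f K i x) j)
          - Vf P (\<lambda>i. A i + B i ** K i) l K \<beta>l \<alpha> x i
        \<le> - lbar l K x i) \<and>
    (\<forall>(Xf :: 'q \<Rightarrow> (real^'n) set) (lam :: real^'n \<Rightarrow> 'q \<Rightarrow> real)
        (\<rho> :: real^'n \<Rightarrow> 'q \<Rightarrow> real) (\<gamma>::real) (kap :: real^'n \<Rightarrow> 'q \<Rightarrow> real^'m).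
       UPI P f Y K Xf \<and> (\<forall>i. Xf i \<subseteq> ball 0 \<delta>) \<and>
       (\<forall>i. lsc (\<lambda>x. lam x i)) \<and> (\<forall>i j. lam 0 i = lam 0 j) \<and>
       (\<forall>i. convex_on UNIV (\<lambda>x. \<rho> x i)) \<and> (\<forall>x i. 0 \<le> \<rho> x i) \<and>
       (\<forall>i. \<rho> 0 i = 0) \<and> (\<forall>x i. x \<noteq> 0 \<longrightarrow> 0 < \<rho> x i) \<and>
       (\<forall>x u i. (\<Sum>j\<in>UNIV. P i j * lam (f x u i) j) - lam x i \<le> l x u i - ls - \<rho> x i) \<and>
       \<gamma> > 0 \<and> (\<forall>x i. \<rho> x i \<ge> \<gamma> * (norm x)\<^sup>2) \<and>
       EMPC_law P f Y Xf l (Vf P (\<lambda>i. A i + B i ** K i) l K \<beta>l \<alpha>) N kap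
       \<longrightarrow> loc_ms_stable P f Y Xf N kap)"
proof -
  let ?Vf = "Vf P (\<lambda>i. A i + B i ** K i) l K \<beta>l"
  obtain \<delta> \<alpha> where \<delta>: "0 < \<delta>" and \<alpha>: "0 < \<alpha>"
    and decrease: "\<And>x i. norm x < \<delta> \<Longrightarrow>
          (\<Sum>j\<in>UNIV. P i j * ?Vf \<alpha> (fhat f K i x) j) - ?Vf \<alpha> x i \<le> - lbar l K x i"
    using terminal_cost_decrease[OF chain(1) steady(2) AB K_mss fhat_smooth lbar_smooth] by blast
  obtain bV where bV: "\<And>y j. norm y < \<delta> \<Longrightarrow> bV \<le> ?Vf \<alpha> y j"
    using Vf_bounded_below_on_ball[OF chain(1) K_mss] by blast
  have stable: "loc_ms_stable P f Y Xf N kap"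
    if "UPI P f Y K Xf" and "\<forall>i. Xf i \<subseteq> ball 0 \<delta>" and "\<forall>i. lsc (\<lambda>x. lam x i)"
      and "\<forall>x u i. (\<Sum>j\<in>UNIV. P i j * lam (f x u i) j) - lam x i \<le> l x u i - ls - \<rho> x i"
      and "0 < \<gamma>" and "\<forall>x i. \<gamma> * (norm x)\<^sup>2 \<le> \<rho> x i"
      and "EMPC_law P f Y Xf l (?Vf \<alpha>) N kap"
    for Xf lam \<rho> \<gamma> kap
  proof -
    have in_ball: "\<And>y \<theta>. y \<in> Xf \<theta> \<Longrightarrow> norm y < \<delta>"
      using that(2) by (auto simp: subset_iff)
    show ?thesis
      by (rule empc_loc_ms_stable[where lam=lam and \<rho>=\<rho> and \<gamma>=\<gamma>, OF chain(1) N that(1)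
            decrease[OF in_ball] steady(3) that(7) Y(2) l_nonneg bV[OF in_ball]])
         (use that in auto)
  qed
  show ?thesis
    using \<delta> \<alpha> decrease stable by (intro exI[of _ \<delta>] exI[of _ \<alpha>]) auto
qed

end
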